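(* Let a chemical reaction network satisfying (H1) and (H2) consist of exactly $2N$ connected components which, for $i=1,\dots,N$, come in pairs \[ Y_i+S_{i,0}\rightleftarrows U_{i,1}\to\cdots\rightleftarrows U_{i,L_i}\to Y_i+S_{i,L_i},\qquad \widetilde Y_i+S_{i,L_i}\rightleftarrows V_{i,L_i}\to\widetilde Y_i+S_{i,L_i-1}\rightleftarrows\cdots\rightleftarrows V_{i,1}\to\widetilde Y_i+S_{i,0}, \] with rate constants $a_{i,j},b_{i,j},c_{i,j},\tilde a_{i,j},\tilde b_{i,j},\tilde c_{i,j}$ as in the context. Then the associated system is identifiable (all rate constants are identifiable) from $s_{1,L_1},\dots,s_{N,L_N}$, and for each $i$ it suffices to use $s_{i,L_i}^{(\ell)}$ with $1\le\ell\le\max\{2,2L_i-1\}$.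
   Context: Species are capital letters, concentrations lower-case letters. A chemical reaction network is a finite directed graph on complexes with reactions $y\to y'$ carrying rate constants $k_{yy'}>0$ (vector $\mathbf{k}$); mass-action system $\dot{\mathbf{x}}=\sum k_{yy'}\mathbf{x}^y(y'-y)$. Total derivative: $\dot\varphi=\sum_i\frac{\partial\varphi}{\partial x_i}\dot x_i$ with $\dot x_i$ replaced by the right-hand side; $\varphi^{(\ell)}$ the $\ell$-th iterate. A map $\psi$ of $\mathbf{k}$ is identifiable from $x_{i_1},\dots,x_{i_t}$ using orders $1\le\ell\le D$ if, for positive $\mathbf{k}^*,\mathbf{k}^{**}$, equality of $x_{i_j}^{(\ell)}(\mathbf{x},\mathbf{k}^* )$ and $x_{i_j}^{(\ell)}(\mathbf{x},\mathbf{k}^{**})$ as polynomials in $\mathbf{x}$ for all $1\le \ell\le D$ and all $j$ implies $\psi(\mathbf{k}^* )=\psi(\mathbf{k}^{**})$; the system is identifiable if this holds for $\psi=$ identity. (H1) Every connected component has the form $Y+S_0\rightleftarrows U_1\to\cdots\rightleftarrows U_L\to Y+S_L$ (reactions $Y+S_{j-1}\to U_j$, $U_j\to Y+S_{j-1}$, $U_j\to Y+S_j$), unique enzyme $Y$; intermediates distinct throughout the network; the non-intermediates of a component are pairwise distinct but may appear in other components; each complex in a unique component. $\mathscr{S}_U$ = substrates/products of the component of intermediate $U$. (H2) A partition $\mathscr{S}^{(0)}\sqcup\cdots\sqcup\mathscr{S}^{(M)}$ ($M\ge2$, nonempty parts, $\mathscr{S}^{(0)}$ the intermediates) such that for each intermediate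 $U$ with enzyme $Y$ there is $\alpha\ge1$ with $\mathscr{S}_U\subseteq\mathscr{S}^{(\alpha)}$, $Y\notin\mathscr{S}^{(\alpha)}$. Rates: $Y_i+S_{i,j-1}\to U_{i,j}$: $a_{i,j}$; $U_{i,j}\to Y_i+S_{i,j-1}$: $b_{i,j}$; $U_{i,j}\to Y_i+S_{i,j}$: $c_{i,j}$; $\widetilde Y_i+S_{i,j}\to V_{i,j}$: $\tilde a_{i,j}$; $V_{i,j}\to\widetilde Y_i+S_{i,j}$: $\tilde b_{i,j}$; $V_{i,j}\to\widetilde Y_i+S_{i,j-1}$: $\tilde c_{i,j}$. *)

theory Defs
  imports "HOL-Analysis.Analysis"
begin

type_synonym 's complex = "'s \<Rightarrow> nat"

definition monom :: "('s::finite) complex \<Rightarrow> ('s \<Rightarrow> real) \<Rightarrow> real" where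
  "monom y x = (\<Prod>t\<in>UNIV. x t ^ y t)"

definition mass_action ::
  "'r set \<Rightarrow> ('r \<Rightarrow> ('s::finite) complex) \<Rightarrow> ('r \<Rightarrow> 's complex) \<Rightarrow> ('r \<Rightarrow> real)
     \<Rightarrow> ('s \<Rightarrow> real) \<Rightarrow> 's \<Rightarrow> real" where
  "mass_action R src tgt k x s =
     (\<Sum>r\<in>R. k r * monom (src r) x * (real (tgt r s) - real (src r s)))"

definition pdiff :: "(('s \<Rightarrow> real) \<Rightarrow> real) \<Rightarrow> ('s \<Rightarrow> real) \<Rightarrow> 's \<Rightarrow> real" where
  "pdiff \<phi> x s = deriv (\<lambda>t. \<phi> (x(s := x s + t))) 0"

definition total_deriv ::
  "(('s::finite \<Rightarrow> real) \<Rightarrow> 's \<Rightarrow> real) \<Rightarrow> (('s \<Rightarrow> real) \<Rightarrow> real) \<Rightarrow> ('s \<Rightarrow> real) \<Rightarrow> real" where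
  "total_deriv F \<phi> = (\<lambda>x. \<Sum>s\<in>UNIV. pdiff \<phi> x s * F x s)"

definition total_deriv_iter ::
  "(('s::finite \<Rightarrow> real) \<Rightarrow> 's \<Rightarrow> real) \<Rightarrow> nat \<Rightarrow> (('s \<Rightarrow> real) \<Rightarrow> real) \<Rightarrow> ('s \<Rightarrow> real) \<Rightarrow> real" where
  "total_deriv_iter F l \<phi> = (total_deriv F ^^ l) \<phi>"

text \<open>Reaction labels: Ra i j : Y_i+S_{i,j-1} -> U_{i,j} (rate a_{i,j}),
  Rb i j : U_{i,j} -> Y_i+S_{i,j-1} (b_{i,j}), Rc i j : U_{i,j} -> Y_i+S_{i,j} (c_{i,j}),
  Rta i j : Yt_i+S_{i,j} -> V_{i,j} (tilde a), Rtb i j : V_{i,j} -> Yt_i+S_{i,j} (tilde b),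
  Rtc i j : V_{i,j} -> Yt_i+S_{i,j-1} (tilde c).\<close>
datatype rlab = Ra nat nat | Rb nat nat | Rc nat nat | Rta nat nat | Rtb nat nat | Rtc nat nat

definition cpx1 :: "'s \<Rightarrow> 's complex" where
  "cpx1 u = (\<lambda>t. if t = u then 1 else 0)"

definition cpx2 :: "'s \<Rightarrow> 's \<Rightarrow> 's complex" where
  "cpx2 y s = (\<lambda>t. (if t = y then 1 else 0) + (if t = s then 1 else 0))"

definition labs :: "nat \<Rightarrow> (nat \<Rightarrow> nat) \<Rightarrow> rlab set" where
  "labs N L = (\<Union>i\<in>{1..N}. \<Union>j\<in>{1..L i}.
      {Ra i j, Rb i j, Rc i j, Rta i j, Rtb i j, Rtc i j})"

fun src :: "(nat \<Rightarrow> 's) \<Rightarrow> (nat \<Rightarrow> 's) \<Rightarrow> (nat \<Rightarrow> nat \<Rightarrow> 's) \<Rightarrow> (nat \<Rightarrow> nat \<Rightarrow> 's)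
    \<Rightarrow> (nat \<Rightarrow> nat \<Rightarrow> 's) \<Rightarrow> rlab \<Rightarrow> 's complex" where
  "src Y Yt S U V (Ra i j) = cpx2 (Y i) (S i (j - 1))"
| "src Y Yt S U V (Rb i j) = cpx1 (U i j)"
| "src Y Yt S U V (Rc i j) = cpx1 (U i j)"
| "src Y Yt S U V (Rta i j) = cpx2 (Yt i) (S i j)"
| "src Y Yt S U V (Rtb i j) = cpx1 (V i j)"
| "src Y Yt S U V (Rtc i j) = cpx1 (V i j)"

fun tgt :: "(nat \<Rightarrow> 's) \<Rightarrow> (nat \<Rightarrow> 's) \<Rightarrow> (nat \<Rightarrow> nat \<Rightarrow> 's) \<Rightarrow> (nat \<Rightarrow> nat \<Rightarrow> 's)
    \<Rightarrow> (nat \<Rightarrow> nat \<Rightarrow> 's) \<Rightarrow> rlab \<Rightarrow> 's complex" where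
  "tgt Y Yt S U V (Ra i j) = cpx1 (U i j)"
| "tgt Y Yt S U V (Rb i j) = cpx2 (Y i) (S i (j - 1))"
| "tgt Y Yt S U V (Rc i j) = cpx2 (Y i) (S i j)"
| "tgt Y Yt S U V (Rta i j) = cpx1 (V i j)"
| "tgt Y Yt S U V (Rtb i j) = cpx2 (Yt i) (S i j)"
| "tgt Y Yt S U V (Rtc i j) = cpx2 (Yt i) (S i (j - 1))"

definition chain_field ::
  "nat \<Rightarrow> (nat \<Rightarrow> nat) \<Rightarrow> (nat \<Rightarrow> 's::finite) \<Rightarrow> (nat \<Rightarrow> 's) \<Rightarrow> (nat \<Rightarrow> nat \<Rightarrow> 's)
     \<Rightarrow> (nat \<Rightarrow> nat \<Rightarrow> 's) \<Rightarrow> (nat \<Rightarrow> nat \<Rightarrow> 's) \<Rightarrow> (rlab \<Rightarrow> real)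
     \<Rightarrow> ('s \<Rightarrow> real) \<Rightarrow> 's \<Rightarrow> real" where
  "chain_field N L Y Yt S U V k =
     mass_action (labs N L) (src Y Yt S U V) (tgt Y Yt S U V) k"

definition intermediates :: "nat \<Rightarrow> (nat \<Rightarrow> nat) \<Rightarrow> (nat \<Rightarrow> nat \<Rightarrow> 's) \<Rightarrow> (nat \<Rightarrow> nat \<Rightarrow> 's) \<Rightarrow> 's set" where
  "intermediates N L U V = (\<Union>i\<in>{1..N}. U i ` {1..L i} \<union> V i ` {1..L i})"

definition nonintermediates :: "nat \<Rightarrow> (nat \<Rightarrow> nat) \<Rightarrow> (nat \<Rightarrow> 's) \<Rightarrow> (nat \<Rightarrow> 's)
    \<Rightarrow> (nat \<Rightarrow> nat \<Rightarrow> 's) \<Rightarrow> 's set" where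
  "nonintermediates N L Y Yt S = (\<Union>i\<in>{1..N}. {Y i, Yt i} \<union> S i ` {0..L i})"

text \<open>Component indices: (False, i) is the forward chain with enzyme Y_i,
  (True, i) is the backward chain with enzyme Yt_i.\<close>
definition comp_complexes :: "(nat \<Rightarrow> nat) \<Rightarrow> (nat \<Rightarrow> 's) \<Rightarrow> (nat \<Rightarrow> 's) \<Rightarrow> (nat \<Rightarrow> nat \<Rightarrow> 's)
    \<Rightarrow> (nat \<Rightarrow> nat \<Rightarrow> 's) \<Rightarrow> (nat \<Rightarrow> nat \<Rightarrow> 's) \<Rightarrow> bool \<times> nat \<Rightarrow> 's complex set" where
  "comp_complexes L Y Yt S U V c =
     (if fst c then (\<lambda>j. cpx2 (Yt (snd c)) (S (snd c) j)) ` {0..L (snd c)} \<union> (\<lambda>j. cpx1 (V (snd c) j)) ` {1..L (snd c)}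
      else (\<lambda>j. cpx2 (Y (snd c)) (S (snd c) j)) ` {0..L (snd c)} \<union> (\<lambda>j. cpx1 (U (snd c) j)) ` {1..L (snd c)})"

definition H1 :: "nat \<Rightarrow> (nat \<Rightarrow> nat) \<Rightarrow> (nat \<Rightarrow> 's) \<Rightarrow> (nat \<Rightarrow> 's) \<Rightarrow> (nat \<Rightarrow> nat \<Rightarrow> 's)
    \<Rightarrow> (nat \<Rightarrow> nat \<Rightarrow> 's) \<Rightarrow> (nat \<Rightarrow> nat \<Rightarrow> 's) \<Rightarrow> bool" where
  "H1 N L Y Yt S U V \<longleftrightarrow>
     (\<forall>i\<in>{1..N}. 1 \<le> L i) \<and>
     \<comment> \<open>intermediates are pairwise distinct throughout the network\<close>
     inj_on (\<lambda>(b, i, j). if b then V i j else U i j)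
        {(b, i, j). i \<in> {1..N} \<and> j \<in> {1..L i}} \<and>
     \<comment> \<open>intermediates are not substrates/products/enzymes\<close>
     intermediates N L U V \<inter> nonintermediates N L Y Yt S = {} \<and>
     \<comment> \<open>non-intermediates of a component are pairwise distinct\<close>
     (\<forall>i\<in>{1..N}. inj_on (S i) {0..L i} \<and> Y i \<notin> S i ` {0..L i} \<and> Yt i \<notin> S i ` {0..L i}) \<and>
     \<comment> \<open>each complex lies in a unique component\<close>
     (\<forall>c\<in>UNIV \<times> {1..N}. \<forall>c'\<in>UNIV \<times> {1..N}. c \<noteq> c' \<longrightarrow>
        comp_complexes L Y Yt S U V c \<inter> comp_complexes L Y Yt S U V c' = {})"

definition H2 :: "nat \<Rightarrow> (nat \<Rightarrow> nat) \<Rightarrow> (nat \<Rightarrow> 's) \<Rightarrow> (nat \<Rightarrow> 's) \<Rightarrow> (nat \<Rightarrow> nat \<Rightarrow> 's)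
    \<Rightarrow> (nat \<Rightarrow> nat \<Rightarrow> 's) \<Rightarrow> (nat \<Rightarrow> nat \<Rightarrow> 's) \<Rightarrow> bool" where
  "H2 N L Y Yt S U V \<longleftrightarrow>
     (\<exists>M::nat. \<exists>p::'s \<Rightarrow> nat.
        let Sp = intermediates N L U V \<union> nonintermediates N L Y Yt S in
        2 \<le> M \<and> (\<forall>s\<in>Sp. p s \<le> M) \<and> (\<forall>\<alpha>\<le>M. \<exists>s\<in>Sp. p s = \<alpha>) \<and>
        (\<forall>s\<in>Sp. p s = 0 \<longleftrightarrow> s \<in> intermediates N L U V) \<and>
        (\<forall>i\<in>{1..N}. \<forall>j\<in>{1..L i}.
           (\<exists>\<alpha>\<ge>1. (\<forall>j'\<in>{0..L i}. p (S i j') = \<alpha>) \<and> p (Y i) \<noteq> \<alpha>) \<and>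
           (\<exists>\<alpha>\<ge>1. (\<forall>j'\<in>{0..L i}. p (S i j') = \<alpha>) \<and> p (Yt i) \<noteq> \<alpha>)))"

end

theory Submission
  imports Defs
begin

text \<open>
  The iterated total derivatives of the concentration s_{i,L_i} are polynomials, and a polynomial
  function determines its coefficients, so the hypothesis says that the coefficient functions of the
  derivatives agree. These coefficients obey a linear recursion driven by the rate constants.
  A monomial y_i^m t can only have a nonzero coefficient in the n-th derivative when n is at least
  the distance from S_{i,L_i} to t along the two chains of component i; consequently the coefficients
  of y_i^{L_i-j} u_{i,j} and y_i^{L_i-j} v_{i,j} in derivative 2(L_i-j)+1 are c_{i,j} P_j and
  tilde b_{i,j} P_j, where P_j is the product of a_{i,q} c_{i,q} over q > j. Together with a few
  coefficients of the first three derivatives this recovers all rate constants of component i one after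
  another, dividing only by products of rate constants, which are positive.
\<close>

section \<open>Total derivatives of polynomials as recursions on coefficients\<close>

definition exps_le :: "nat \<Rightarrow> 's complex set" where
  "exps_le K = {b. \<forall>t. b t \<le> K}"

definition coeffs_in :: "nat \<Rightarrow> ('s complex \<Rightarrow> real) \<Rightarrow> bool" where
  "coeffs_in K c \<longleftrightarrow> (\<forall>b. c b \<noteq> 0 \<longrightarrow> b \<in> exps_le K)"

definition poly_of :: "nat \<Rightarrow> (('s::finite) complex \<Rightarrow> real) \<Rightarrow> ('s \<Rightarrow> real) \<Rightarrow> real" where
  "poly_of K c x = (\<Sum>b\<in>exps_le K. c b * monom b x)"

definition pre_exp :: "'s complex \<Rightarrow> 's complex \<Rightarrow> 's \<Rightarrow> 's complex" where
  "pre_exp g y s = (\<lambda>t. g t - y t + (if t = s then 1 else 0))"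

text \<open>Differentiating x^b in x_s and multiplying by the reaction monomial x^y gives b_s x^g with
  g = b - e_s + y; hence b = pre_exp g y s and b_s = g_s + 1 - y_s.\<close>
definition lie_coeff :: "'r set \<Rightarrow> ('r \<Rightarrow> ('s::finite) complex) \<Rightarrow> ('r \<Rightarrow> 's complex) \<Rightarrow> ('r \<Rightarrow> real)
   \<Rightarrow> ('s complex \<Rightarrow> real) \<Rightarrow> 's complex \<Rightarrow> real" where
  "lie_coeff R sr tg k c g = (\<Sum>r\<in>R. if sr r \<le> g then
      k r * (\<Sum>s\<in>UNIV. (real (tg r s) - real (sr r s)) *
                        ((real (g s) + 1 - real (sr r s)) * c (pre_exp g (sr r) s)))
     else 0)"

lemma finite_exps_le: "finite (exps_le K :: ('s::finite) complex set)"
proof -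
  have "exps_le K = (PiE UNIV (\<lambda>_. {..K}) :: 's complex set)"
    by (auto simp: exps_le_def PiE_UNIV_domain)
  thus ?thesis by (simp add: finite_PiE)
qed

lemma monom_add: "monom (\<lambda>t. a t + b t) x = monom a x * monom b x"
  unfolding monom_def by (simp add: power_add prod.distrib)

lemma has_field_derivative_monom:
  "((\<lambda>t. monom b (x(s := x s + t))) has_field_derivative
      (real (b s) * monom (b(s := b s - 1)) x)) (at 0)"
proof -
  define P where "P = (\<Prod>t\<in>UNIV-{s}. x t ^ b t)"
  have split: "monom b' x' = x' s ^ b' s * (\<Prod>t\<in>UNIV-{s}. x' t ^ b' t)" for b' x'
    unfolding monom_def by (simp add: prod.remove)
  have e: "monom b (x(s := x s + t)) = (x s + t) ^ b s * P" for t
    unfolding P_def by (subst split) (auto intro!: prod.cong)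
  have d: "monom (b(s := b s - 1)) x = x s ^ (b s - 1) * P"
    unfolding P_def by (subst split) (auto intro!: prod.cong)
  have "((\<lambda>t. (x s + t) ^ b s * P) has_field_derivative (real (b s) * (x s + 0) ^ (b s - 1) * 1 * P)) (at 0)"
    by (intro derivative_eq_intros) auto
  thus ?thesis unfolding e d by (simp add: mult.assoc)
qed

lemma pdiff_poly_of:
  "pdiff (poly_of K c) x s = (\<Sum>b\<in>exps_le K. c b * (real (b s) * monom (b(s := b s - 1)) x))"
proof -
  have "((\<lambda>t. poly_of K c (x(s := x s + t))) has_field_derivative
      (\<Sum>b\<in>exps_le K. c b * (real (b s) * monom (b(s := b s - 1)) x))) (at 0)"
    unfolding poly_of_def by (intro DERIV_sum DERIV_cmult has_field_derivative_monom)
  thus ?thesis unfolding pdiff_def by (rule DERIV_imp_deriv)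
qed

text \<open>The substitution g = b - e_s + y behind the definition of lie_coeff.\<close>
lemma sum_exps_le_shift:
  fixes y :: "('s::finite) complex"
  assumes y: "\<And>t. y t \<le> d" and c: "coeffs_in K c"
  shows "(\<Sum>b\<in>exps_le K. c b * (real (b s) * monom (\<lambda>t. (b(s := b s - 1)) t + y t) x)) =
         (\<Sum>g\<in>exps_le (K + d). if y \<le> g
            then (real (g s) + 1 - real (y s)) * c (pre_exp g y s) * monom g x else 0)"
proof -
  let ?S0 = "{b\<in>exps_le K. 1 \<le> b s}"
  let ?j = "\<lambda>b. (\<lambda>t. (b(s := b s - 1)) t + y t)"
  have fin: "finite (exps_le K :: 's complex set)" "finite (exps_le (K + d) :: 's complex set)"
    by (rule finite_exps_le)+
  have inv: "pre_exp (?j b) y s = b" if "1 \<le> b s" for b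
    using that by (auto simp: pre_exp_def fun_eq_iff)
  have "(\<Sum>b\<in>exps_le K. c b * (real (b s) * monom (?j b) x)) = (\<Sum>b\<in>?S0. c b * (real (b s) * monom (?j b) x))"
    by (rule sum.mono_neutral_right) (use fin in auto)
  also have "\<dots> = (\<Sum>g\<in>exps_le (K + d). if y \<le> g
            then (real (g s) + 1 - real (y s)) * c (pre_exp g y s) * monom g x else 0)"
  proof (rule sum.reindex_bij_witness_not_neutral[where S'="{b\<in>?S0. c b = 0}"
        and T'="{g\<in>exps_le (K + d). \<not> y \<le> g \<or> c (pre_exp g y s) = 0}"
        and j="?j" and i="\<lambda>g. pre_exp g y s"])
    show "finite {b\<in>?S0. c b = 0}" using fin by auto
    show "finite {g\<in>exps_le (K + d). \<not> y \<le> g \<or> c (pre_exp g y s) = 0}" using fin by auto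
  next
    fix b assume b: "b \<in> ?S0 - {b\<in>?S0. c b = 0}"
    show "pre_exp (?j b) y s = b" using b inv by auto
    have "(b(s := b s - 1)) t \<le> K" for t using b by (auto simp: exps_le_def intro: le_trans[OF diff_le_self])
    hence "?j b t \<le> K + d" for t using y by (intro add_mono)
    hence "?j b \<in> exps_le (K + d)" by (simp add: exps_le_def)
    moreover have "y \<le> ?j b" by (simp add: le_fun_def)
    ultimately show "?j b \<in> exps_le (K + d) - {g\<in>exps_le (K + d). \<not> y \<le> g \<or> c (pre_exp g y s) = 0}"
      using b inv by auto
  next
    fix g assume g: "g \<in> exps_le (K + d) - {g\<in>exps_le (K + d). \<not> y \<le> g \<or> c (pre_exp g y s) = 0}"
    hence le: "\<And>t. y t \<le> g t" and cn: "c (pre_exp g y s) \<noteq> 0" by (auto simp: le_fun_def)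
    show "?j (pre_exp g y s) = g"
      using le by (auto simp: pre_exp_def fun_eq_iff)
    show "pre_exp g y s \<in> ?S0 - {b\<in>?S0. c b = 0}"
      using cn c by (auto simp: coeffs_in_def pre_exp_def)
  next
    fix b assume "b \<in> {b\<in>?S0. c b = 0}"
    thus "c b * (real (b s) * monom (?j b) x) = 0" by simp
  next
    fix g assume "g \<in> {g\<in>exps_le (K + d). \<not> y \<le> g \<or> c (pre_exp g y s) = 0}"
    thus "(if y \<le> g then (real (g s) + 1 - real (y s)) * c (pre_exp g y s) * monom g x else 0) = 0"
      by auto
  next
    fix b assume b: "b \<in> ?S0"
    have "real (?j b s) + 1 - real (y s) = real (b s)"
      using b by (auto simp: of_nat_diff)
    moreover have "y \<le> ?j b" by (simp add: le_fun_def)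
    ultimately show "(if y \<le> ?j b then (real (?j b s) + 1 - real (y s)) * c (pre_exp (?j b) y s) * monom (?j b) x
                      else 0) = c b * (real (b s) * monom (?j b) x)"
      using b inv by simp
  qed
  finally show ?thesis .
qed

lemma total_deriv_poly_of:
  fixes R :: "'r set" and sr tg :: "'r \<Rightarrow> ('s::finite) complex"
  assumes sr: "\<And>r t. sr r t \<le> d" and c: "coeffs_in K c"
  shows "total_deriv (mass_action R sr tg k) (poly_of K c) x = poly_of (K + d) (lie_coeff R sr tg k c) x"
proof -
  define T where "T = (\<lambda>s r g. if sr r \<le> g then k r * (real (tg r s) - real (sr r s)) *
      ((real (g s) + 1 - real (sr r s)) * c (pre_exp g (sr r) s)) * monom g x else 0)"
  have "total_deriv (mass_action R sr tg k) (poly_of K c) x =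
     (\<Sum>s\<in>UNIV. (\<Sum>b\<in>exps_le K. c b * (real (b s) * monom (b(s := b s - 1)) x)) *
        (\<Sum>r\<in>R. k r * monom (sr r) x * (real (tg r s) - real (sr r s))))"
    by (simp add: total_deriv_def pdiff_poly_of mass_action_def)
  also have "\<dots> = (\<Sum>s\<in>UNIV. \<Sum>r\<in>R. k r * (real (tg r s) - real (sr r s)) *
        (\<Sum>b\<in>exps_le K. c b * (real (b s) * monom (\<lambda>t. (b(s := b s - 1)) t + sr r t) x)))"
    unfolding sum_distrib_left sum_distrib_right monom_add
    by (intro sum.cong refl) (simp add: mult_ac)
  also have "\<dots> = (\<Sum>s\<in>UNIV. \<Sum>r\<in>R. \<Sum>g\<in>exps_le (K + d). T s r g)"
    unfolding T_def sum_exps_le_shift[OF sr c] sum_distrib_left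
    by (intro sum.cong refl) (simp add: mult_ac)
  also have "\<dots> = (\<Sum>r\<in>R. \<Sum>s\<in>UNIV. \<Sum>g\<in>exps_le (K + d). T s r g)"
    by (rule sum.swap)
  also have "\<dots> = (\<Sum>r\<in>R. \<Sum>g\<in>exps_le (K + d). \<Sum>s\<in>UNIV. T s r g)"
    by (intro sum.cong refl sum.swap)
  also have "\<dots> = (\<Sum>g\<in>exps_le (K + d). \<Sum>r\<in>R. \<Sum>s\<in>UNIV. T s r g)"
    by (rule sum.swap)
  also have "\<dots> = poly_of (K + d) (lie_coeff R sr tg k c) x"
    unfolding poly_of_def lie_coeff_def sum_distrib_right
    by (intro sum.cong refl) (simp add: T_def sum_distrib_left sum_distrib_right mult_ac)
  finally show ?thesis .
qed

lemma coeffs_in_lie_coeff: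
  fixes R :: "'r set" and sr tg :: "'r \<Rightarrow> ('s::finite) complex"
  assumes sr: "\<And>r t. sr r t \<le> d" and c: "coeffs_in K c"
  shows "coeffs_in (K + d) (lie_coeff R sr tg k c)"
  unfolding coeffs_in_def
proof (intro allI impI)
  fix g assume "lie_coeff R sr tg k c g \<noteq> 0"
  then obtain r where "(if sr r \<le> g then k r * (\<Sum>s\<in>UNIV. (real (tg r s) - real (sr r s)) *
      ((real (g s) + 1 - real (sr r s)) * c (pre_exp g (sr r) s))) else 0) \<noteq> 0"
    unfolding lie_coeff_def using sum.not_neutral_contains_not_neutral by blast
  hence le: "sr r \<le> g" and "(\<Sum>s\<in>UNIV. (real (tg r s) - real (sr r s)) *
      ((real (g s) + 1 - real (sr r s)) * c (pre_exp g (sr r) s))) \<noteq> 0"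
    by (auto split: if_splits)
  then obtain s where "(real (tg r s) - real (sr r s)) *
      ((real (g s) + 1 - real (sr r s)) * c (pre_exp g (sr r) s)) \<noteq> 0"
    using sum.not_neutral_contains_not_neutral by blast
  hence "pre_exp g (sr r) s \<in> exps_le K" using c by (auto simp: coeffs_in_def)
  hence shifted: "g t - sr r t + (if t = s then 1 else 0) \<le> K" for t unfolding exps_le_def pre_exp_def by auto
  have "g t \<le> K + d" for t
    using shifted[of t] sr[of r t] le_funD[OF le, of t] by (simp split: if_splits)
  thus "g \<in> exps_le (K + d)" by (simp add: exps_le_def)
qed

lemma total_deriv_iter_poly_of:
  fixes R :: "'r set" and sr tg :: "'r \<Rightarrow> ('s::finite) complex"
  assumes sr: "\<And>r t. sr r t \<le> d" and c: "coeffs_in K c"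
  shows "coeffs_in (K + d * l) ((lie_coeff R sr tg k ^^ l) c) \<and>
         total_deriv_iter (mass_action R sr tg k) l (poly_of K c) = poly_of (K + d * l) ((lie_coeff R sr tg k ^^ l) c)"
proof (induction l)
  case 0
  then show ?case using c by (simp add: total_deriv_iter_def)
next
  case (Suc l)
  hence c': "coeffs_in (K + d * l) ((lie_coeff R sr tg k ^^ l) c)" by simp
  have "total_deriv_iter (mass_action R sr tg k) (Suc l) (poly_of K c) =
        total_deriv (mass_action R sr tg k) (poly_of (K + d * l) ((lie_coeff R sr tg k ^^ l) c))"
    using Suc by (simp add: total_deriv_iter_def)
  also have "\<dots> = poly_of (K + d * l + d) ((lie_coeff R sr tg k ^^ Suc l) c)"
    by (rule ext, simp add: total_deriv_poly_of[OF sr c'])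
  moreover have "coeffs_in (K + d * l + d) ((lie_coeff R sr tg k ^^ Suc l) c)"
    using coeffs_in_lie_coeff[where sr=sr and R=R and tg=tg and k=k, OF sr c'] by simp
  ultimately show ?case by (simp add: algebra_simps)
qed

section \<open>Polynomial functions determine their coefficients\<close>

lemma base_expansion_unique:
  fixes B :: nat
  assumes "0 < B" "\<forall>i<n. d i < B" "\<forall>i<n. d' i < B" "(\<Sum>i<n. d i * B ^ i) = (\<Sum>i<n. d' i * B ^ i)"
  shows "\<forall>i<n. d i = d' i"
  using assms(2-)
proof (induction n arbitrary: d d')
  case 0 then show ?case by simp
next
  case (Suc n)
  have split: "(\<Sum>i<Suc n. f i * B ^ i) = f 0 + B * (\<Sum>i<n. f (Suc i) * B ^ i)" for f :: "nat \<Rightarrow> nat"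
    unfolding sum.lessThan_Suc_shift by (simp add: sum_distrib_left mult_ac del: sum.lessThan_Suc)
  define X X' where "X = (\<Sum>i<n. d (Suc i) * B ^ i)" and "X' = (\<Sum>i<n. d' (Suc i) * B ^ i)"
  have eq: "d 0 + B * X = d' 0 + B * X'"
    using Suc.prems(3) unfolding split X_def X'_def .
  have "d 0 < B" "d' 0 < B" using Suc.prems(1,2) by auto
  hence "(d 0 + B * X) mod B = d 0" "(d' 0 + B * X') mod B = d' 0"
    "(d 0 + B * X) div B = X" "(d' 0 + B * X') div B = X'"
    using assms(1) by auto
  hence "d 0 = d' 0" and "X = X'" using eq by metis+
  moreover have "\<forall>i<n. d (Suc i) = d' (Suc i)"
    using Suc.IH[of "\<lambda>i. d (Suc i)" "\<lambda>i. d' (Suc i)"] Suc.prems(1,2) \<open>X = X'\<close>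
    unfolding X_def X'_def by auto
  ultimately show ?case by (metis less_Suc_eq_0_disj)
qed

text \<open>Kronecker substitution x_t = z^{(K+1)^{idx t}} turns the exponents in exps_le K into
  distinct powers of a single variable z, and a univariate polynomial vanishing on all reals is zero.\<close>
lemma poly_of_eq_0_imp_coeff_eq_0:
  fixes e :: "('s::finite) complex \<Rightarrow> real"
  assumes zero: "poly_of K e = (\<lambda>_. 0)" and b: "b \<in> exps_le K"
  shows "e b = 0"
proof -
  obtain idx :: "'s \<Rightarrow> nat" where bij: "bij_betw idx UNIV {..<card (UNIV::'s set)}"
    using ex_bij_betw_finite_nat[of "UNIV::'s set"] atLeast0LessThan by auto
  define n B where "n = card (UNIV :: 's set)" and "B = K + 1"
  define inv where "inv = the_inv_into UNIV idx"
  have inj: "inj idx" using bij by (simp add: bij_betw_def)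
  have inv_idx: "inv (idx t) = t" for t unfolding inv_def using inj by (simp add: the_inv_into_f_f)
  have idx_range: "idx ` UNIV = {..<n}" using bij unfolding n_def by (simp add: bij_betw_def)
  define enc where "enc b = (\<Sum>t\<in>UNIV. b t * B ^ idx t)" for b :: "'s complex"
  have enc_digits: "enc b = (\<Sum>i<n. b (inv i) * B ^ i)" for b
    unfolding enc_def idx_range[symmetric] by (subst sum.reindex[OF inj]) (simp add: inv_idx)
  have enc_inj: "inj_on enc (exps_le K)"
  proof (rule inj_onI)
    fix b1 b2 assume b1: "b1 \<in> exps_le K" and b2: "b2 \<in> exps_le K" and eq: "enc b1 = enc b2"
    have "\<forall>i<n. b1 (inv i) = b2 (inv i)"
    proof (rule base_expansion_unique)
      show "\<forall>i<n. b1 (inv i) < B" "\<forall>i<n. b2 (inv i) < B"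
        using b1 b2 unfolding exps_le_def B_def by (simp_all add: less_Suc_eq_le)
    qed (use eq in \<open>simp_all add: B_def enc_digits\<close>)
    moreover have "idx t < n" for t using idx_range by auto
    ultimately show "b1 = b2" by (metis inv_idx ext)
  qed
  have fin: "finite (exps_le K :: 's complex set)" by (rule finite_exps_le)
  define M where "M = Max (enc ` exps_le K)"
  have enc_le: "enc b' \<le> M" if "b' \<in> exps_le K" for b' unfolding M_def using fin that by auto
  define cf where "cf m = (if m \<in> enc ` exps_le K then e (the_inv_into (exps_le K) enc m) else 0)" for m
  have "(\<Sum>m\<le>M. cf m * z ^ m) = 0" for z :: real
  proof -
    define x where "x = (\<lambda>t. z ^ (B ^ idx t))"
    have monom_x: "monom b' x = z ^ enc b'" for b'
      unfolding monom_def x_def enc_def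
      by (simp add: power_sum power_mult[symmetric] mult.commute)
    have "(\<Sum>m\<le>M. cf m * z ^ m) = (\<Sum>m\<in>enc ` exps_le K. cf m * z ^ m)"
      by (rule sum.mono_neutral_right) (use enc_le fin in \<open>auto simp: cf_def\<close>)
    also have "\<dots> = (\<Sum>b'\<in>exps_le K. e b' * monom b' x)"
      by (simp add: sum.reindex[OF enc_inj] cf_def monom_x the_inv_into_f_f[OF enc_inj])
    also have "\<dots> = 0" using fun_cong[OF zero, of x] by (simp add: poly_of_def)
    finally show ?thesis .
  qed
  hence "cf (enc b) = 0" using polyfun_eq_0 enc_le[OF b] by blast
  thus ?thesis using b by (simp add: cf_def the_inv_into_f_f[OF enc_inj])
qed

lemma poly_of_inject:
  fixes c d :: "('s::finite) complex \<Rightarrow> real"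
  assumes "coeffs_in K c" "coeffs_in K d" "poly_of K c = poly_of K d"
  shows "c = d"
proof
  fix b
  have zero: "poly_of K (\<lambda>b. c b - d b) = (\<lambda>_. 0)"
    using assms(3) by (auto simp: poly_of_def left_diff_distrib sum_subtractf fun_eq_iff)
  show "c b = d b"
  proof (cases "b \<in> exps_le K")
    case True
    thus ?thesis using poly_of_eq_0_imp_coeff_eq_0[OF zero] by simp
  next
    case False
    hence "c b = 0" "d b = 0" using assms(1,2) unfolding coeffs_in_def by blast+
    thus ?thesis by simp
  qed
qed

lemma cpx2_comm: "cpx2 a b = cpx2 b a"
  by (auto simp: cpx2_def fun_eq_iff)

lemma cpx2_pos: "0 < cpx2 a b t \<longleftrightarrow> t = a \<or> t = b"
  by (simp add: cpx2_def)

lemma cpx2_eq_iff: "cpx2 a b = cpx2 c d \<longleftrightarrow> (a = c \<and> b = d) \<or> (a = d \<and> b = c)"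
proof
  assume e: "cpx2 a b = cpx2 c d"
  have p: "0 < cpx2 a b t \<longleftrightarrow> 0 < cpx2 c d t" for t using e by simp
  have 1: "a = c \<or> a = d" using p[of a] by (simp add: cpx2_pos)
  have 2: "b = c \<or> b = d" using p[of b] by (simp add: cpx2_pos)
  have 3: "c = a \<or> c = b" using p[of c] by (simp add: cpx2_pos)
  have 4: "d = a \<or> d = b" using p[of d] by (simp add: cpx2_pos)
  show "(a = c \<and> b = d) \<or> (a = d \<and> b = c)"
  proof (cases "a = b")
    case True
    hence "c = a" "d = a" using 3 4 by auto
    thus ?thesis using True by simp
  next
    case False
    thus ?thesis using 1 2 by auto
  qed
next
  assume "(a = c \<and> b = d) \<or> (a = d \<and> b = c)"
  thus "cpx2 a b = cpx2 c d" using cpx2_comm by auto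
qed

lemma cpx1_pos: "0 < cpx1 a t \<longleftrightarrow> t = a"
  by (simp add: cpx1_def)

lemma cpx1_ne_cpx2: "cpx1 a \<noteq> cpx2 b c"
proof
  assume e: "cpx1 a = cpx2 b c"
  have "0 < cpx2 b c b" "0 < cpx2 b c c" by (simp_all add: cpx2_pos)
  hence "b = a" "c = a" using e cpx1_pos by metis+
  hence "cpx2 b c a = 2" by (simp add: cpx2_def)
  moreover have "cpx1 a a = 1" by (simp add: cpx1_def)
  ultimately show False using e by simp
qed

lemma cpx1_eq_iff: "cpx1 a = cpx1 b \<longleftrightarrow> a = b"
proof
  assume e: "cpx1 a = cpx1 b"
  have "0 < cpx1 a a" by (simp add: cpx1_pos)
  hence "0 < cpx1 b a" using e by simp
  thus "a = b" by (simp add: cpx1_pos)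
qed simp

lemma cpx1_apply: "cpx1 a t = (if t = a then 1 else 0)" by (simp add: cpx1_def)

lemma cpx2_apply: "cpx2 a b t = (if t = a then 1 else 0) + (if t = b then 1 else 0)" by (simp add: cpx2_def)

lemma cpx1_le_iff: "cpx1 a \<le> g \<longleftrightarrow> 0 < g a"
  unfolding le_fun_def cpx1_def by (auto simp: Suc_le_eq)

lemma cpx2_le_iff: "a \<noteq> b \<Longrightarrow> cpx2 a b \<le> g \<longleftrightarrow> 0 < g a \<and> 0 < g b"
  unfolding le_fun_def cpx2_def by (auto simp: Suc_le_eq)

lemma sum_cpx1: "(\<Sum>s\<in>UNIV. real (cpx1 (a::'a::finite) s) * h s) = (h a :: real)"
proof -
  have "(\<Sum>s\<in>UNIV. real (cpx1 a s) * h s) = (\<Sum>s\<in>UNIV. if s = a then h s else 0)"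
    by (rule sum.cong) (auto simp: cpx1_def)
  also have "\<dots> = h a" by (simp add: sum.delta)
  finally show ?thesis .
qed

lemma sum_cpx2: "(\<Sum>s\<in>UNIV. real (cpx2 (a::'a::finite) b s) * h s) = (h a + h b :: real)"
proof -
  have "(\<Sum>s\<in>UNIV. real (cpx2 a b s) * h s) = (\<Sum>s\<in>UNIV. real (cpx1 a s) * h s) + (\<Sum>s\<in>UNIV. real (cpx1 b s) * h s)"
    unfolding sum.distrib[symmetric] by (rule sum.cong) (auto simp: cpx1_def cpx2_def algebra_simps)
  thus ?thesis by (simp add: sum_cpx1)
qed

lemma sum_delta_split: "(\<Sum>s\<in>UNIV. (real (tg s) - real (sr s)) * h s) =
   (\<Sum>s\<in>UNIV. real (tg s) * h s) - (\<Sum>s\<in>UNIV. real (sr s) * (h s :: real))"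
  by (simp add: left_diff_distrib sum_subtractf)

definition cpx3 :: "'s \<Rightarrow> 's \<Rightarrow> 's \<Rightarrow> 's complex" where
  "cpx3 a b c = (\<lambda>t. (if t = a then 1 else 0) + (if t = b then 1 else 0) + (if t = c then 1 else 0))"

lemma cpx3_apply: "cpx3 a b c t = (if t = a then 1 else 0) + (if t = b then 1 else 0) + (if t = c then 1 else 0)"
  by (simp add: cpx3_def)

lemma cpx3_pos: "0 < cpx3 a b c t \<longleftrightarrow> t = a \<or> t = b \<or> t = c"
  by (simp add: cpx3_def)

lemma pre_exp_cpx3_1: "pre_exp (cpx3 a b c) (cpx2 a b) s = cpx2 c s"
  by (simp add: pre_exp_def cpx3_def cpx2_def fun_eq_iff)

lemma pre_exp_cpx3_2: "pre_exp (cpx3 a b c) (cpx2 a c) s = cpx2 b s"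
  by (simp add: pre_exp_def cpx3_def cpx2_def fun_eq_iff)

lemma pre_exp_cpx2_cpx1: "pre_exp (cpx2 a w) (cpx1 w) s = cpx2 a s"
  by (simp add: pre_exp_def cpx1_def cpx2_def fun_eq_iff)

lemma pre_exp_self: "pre_exp g g s = cpx1 s"
  by (simp add: pre_exp_def cpx1_def fun_eq_iff)

lemma monom_cpx1: "monom (cpx1 s) x = x s"
proof -
  have "monom (cpx1 s) x = (\<Prod>t\<in>UNIV. if t = s then x t else 1)"
    unfolding monom_def cpx1_def by (rule prod.cong) auto
  also have "\<dots> = x s" by simp
  finally show ?thesis .
qed

lemma lie_sum_cpx1: "(\<Sum>(s::'s::finite)\<in>UNIV. (real (cpx2 p q s) - real (cpx1 w s)) * (F s * c (pre_exp (cpx2 a w) (cpx1 w) s))) =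
   F p * c (cpx2 a p) + F q * c (cpx2 a q) - F w * (c (cpx2 a w) :: real)"
  unfolding sum_delta_split sum_cpx1 sum_cpx2 pre_exp_cpx2_cpx1 ..

lemma lie_sum_cpx3_1: "(\<Sum>(s::'s::finite)\<in>UNIV. (real (cpx1 w s) - real (cpx2 a b s)) * (F s * c (pre_exp (cpx3 a b cc) (cpx2 a b) s))) =
   F w * c (cpx2 cc w) - (F a * c (cpx2 cc a) + F b * (c (cpx2 cc b) :: real))"
  unfolding sum_delta_split sum_cpx1 sum_cpx2 pre_exp_cpx3_1 ..

lemma lie_sum_cpx3_2: "(\<Sum>(s::'s::finite)\<in>UNIV. (real (cpx1 w s) - real (cpx2 a cc s)) * (F s * c (pre_exp (cpx3 a b cc) (cpx2 a cc) s))) =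
   F w * c (cpx2 b w) - (F a * c (cpx2 b a) + F cc * (c (cpx2 b cc) :: real))"
  unfolding sum_delta_split sum_cpx1 sum_cpx2 pre_exp_cpx3_2 ..

lemma changed_species_cpx1_cpx2: "tg s \<noteq> sr s \<Longrightarrow> tg = cpx1 a \<Longrightarrow> sr = cpx2 b c \<Longrightarrow> s = a \<or> s = b \<or> s = c"
  by (auto simp: cpx1_def cpx2_def split: if_splits)

lemma changed_species_cpx2_cpx1: "tg s \<noteq> sr s \<Longrightarrow> tg = cpx2 b c \<Longrightarrow> sr = cpx1 a \<Longrightarrow> s = a \<or> s = b \<or> s = c"
  by (auto simp: cpx1_def cpx2_def split: if_splits)

locale chain_network =
  fixes N :: nat and L :: "nat \<Rightarrow> nat" and Y Yt :: "nat \<Rightarrow> 's::finite" and S U V :: "nat \<Rightarrow> nat \<Rightarrow> 's"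
  assumes H1_network: "H1 N L Y Yt S U V" and H2_network: "H2 N L Y Yt S U V"
begin

abbreviation "srcF \<equiv> src Y Yt S U V"

abbreviation "tgtF \<equiv> tgt Y Yt S U V"

abbreviation "R \<equiv> labs N L"

lemma L_pos: "i \<in> {1..N} \<Longrightarrow> 1 \<le> L i"
  using H1_network by (auto simp: H1_def)

lemma intermediates_inj: "inj_on (\<lambda>(b, i, j). if b then V i j else U i j) {(b, i, j). i \<in> {1..N} \<and> j \<in> {1..L i}}"
  using H1_network by (simp add: H1_def)

lemma U_eq_iff: "i \<in> {1..N} \<Longrightarrow> i' \<in> {1..N} \<Longrightarrow> j \<in> {1..L i} \<Longrightarrow> j' \<in> {1..L i'} \<Longrightarrow>
   U i j = U i' j' \<longleftrightarrow> i = i' \<and> j = j'"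
  using inj_onD[OF intermediates_inj, of "(False,i,j)" "(False,i',j')"] by auto

lemma V_eq_iff: "i \<in> {1..N} \<Longrightarrow> i' \<in> {1..N} \<Longrightarrow> j \<in> {1..L i} \<Longrightarrow> j' \<in> {1..L i'} \<Longrightarrow>
   V i j = V i' j' \<longleftrightarrow> i = i' \<and> j = j'"
  using inj_onD[OF intermediates_inj, of "(True,i,j)" "(True,i',j')"] by auto

lemma U_neq_V: "i \<in> {1..N} \<Longrightarrow> i' \<in> {1..N} \<Longrightarrow> j \<in> {1..L i} \<Longrightarrow> j' \<in> {1..L i'} \<Longrightarrow>
   U i j \<noteq> V i' j'"
  using inj_onD[OF intermediates_inj, of "(False,i,j)" "(True,i',j')"] by auto

lemma intermediate_not_nonintermediate:
  "w \<in> intermediates N L U V \<Longrightarrow> w \<notin> nonintermediates N L Y Yt S"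
  using H1_network by (auto simp: H1_def)

lemma U_intermediate: "i \<in> {1..N} \<Longrightarrow> j \<in> {1..L i} \<Longrightarrow> U i j \<in> intermediates N L U V"
  unfolding intermediates_def by blast

lemma V_intermediate: "i \<in> {1..N} \<Longrightarrow> j \<in> {1..L i} \<Longrightarrow> V i j \<in> intermediates N L U V"
  unfolding intermediates_def by blast

lemma Y_nonintermediate: "i \<in> {1..N} \<Longrightarrow> Y i \<in> nonintermediates N L Y Yt S"
  unfolding nonintermediates_def by blast

lemma Yt_nonintermediate: "i \<in> {1..N} \<Longrightarrow> Yt i \<in> nonintermediates N L Y Yt S"
  unfolding nonintermediates_def by blast

lemma S_nonintermediate: "i \<in> {1..N} \<Longrightarrow> m \<in> {0..L i} \<Longrightarrow> S i m \<in> nonintermediates N L Y Yt S"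
  unfolding nonintermediates_def by blast

lemma S_eq_iff: "i \<in> {1..N} \<Longrightarrow> a \<in> {0..L i} \<Longrightarrow> b \<in> {0..L i} \<Longrightarrow> S i a = S i b \<longleftrightarrow> a = b"
  using H1_network unfolding H1_def by (meson inj_on_eq_iff)

lemma Y_neq_S: "i \<in> {1..N} \<Longrightarrow> a \<in> {0..L i} \<Longrightarrow> Y i \<noteq> S i a"
  using H1_network unfolding H1_def by blast

lemma Yt_neq_S: "i \<in> {1..N} \<Longrightarrow> a \<in> {0..L i} \<Longrightarrow> Yt i \<noteq> S i a"
  using H1_network unfolding H1_def by blast

lemma component_complexes_unique: "c \<in> UNIV \<times> {1..N} \<Longrightarrow> c' \<in> UNIV \<times> {1..N} \<Longrightarrow>
   x \<in> comp_complexes L Y Yt S U V c \<Longrightarrow> x \<in> comp_complexes L Y Yt S U V c' \<Longrightarrow> c = c'"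
  using H1_network unfolding H1_def by blast

lemma Y_S_complex_eq: "i \<in> {1..N} \<Longrightarrow> i' \<in> {1..N} \<Longrightarrow> a \<in> {0..L i} \<Longrightarrow> b \<in> {0..L i'} \<Longrightarrow>
   cpx2 (Y i) (S i a) = cpx2 (Y i') (S i' b) \<Longrightarrow> i = i' \<and> a = b"
proof -
  assume i: "i \<in> {1..N}" and i': "i' \<in> {1..N}" and a: "a \<in> {0..L i}" and b: "b \<in> {0..L i'}"
    and e: "cpx2 (Y i) (S i a) = cpx2 (Y i') (S i' b)"
  have "cpx2 (Y i) (S i a) \<in> comp_complexes L Y Yt S U V (False, i)" using a by (auto simp: comp_complexes_def)
  moreover have "cpx2 (Y i) (S i a) \<in> comp_complexes L Y Yt S U V (False, i')" using b e by (auto simp: comp_complexes_def)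
  ultimately have ii: "i = i'" using component_complexes_unique[of "(False,i)" "(False,i')"] i i' by auto
  hence "S i a = S i b \<or> (Y i = S i b \<and> S i a = Y i)" using e by (auto simp: cpx2_eq_iff)
  thus ?thesis using ii S_eq_iff[OF i a] b Y_neq_S[OF i a] by auto
qed

lemma Yt_S_complex_eq: "i \<in> {1..N} \<Longrightarrow> i' \<in> {1..N} \<Longrightarrow> a \<in> {0..L i} \<Longrightarrow> b \<in> {0..L i'} \<Longrightarrow>
   cpx2 (Yt i) (S i a) = cpx2 (Yt i') (S i' b) \<Longrightarrow> i = i' \<and> a = b"
proof -
  assume i: "i \<in> {1..N}" and i': "i' \<in> {1..N}" and a: "a \<in> {0..L i}" and b: "b \<in> {0..L i'}"
    and e: "cpx2 (Yt i) (S i a) = cpx2 (Yt i') (S i' b)"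
  have "cpx2 (Yt i) (S i a) \<in> comp_complexes L Y Yt S U V (True, i)" using a by (auto simp: comp_complexes_def)
  moreover have "cpx2 (Yt i) (S i a) \<in> comp_complexes L Y Yt S U V (True, i')" using b e by (auto simp: comp_complexes_def)
  ultimately have ii: "i = i'" using component_complexes_unique[of "(True,i)" "(True,i')"] i i' by auto
  hence "S i a = S i b \<or> (Yt i = S i b \<and> S i a = Yt i)" using e by (auto simp: cpx2_eq_iff)
  thus ?thesis using ii S_eq_iff[OF i a] b Yt_neq_S[OF i a] by auto
qed

lemma Y_S_complex_neq_Yt_S: "i \<in> {1..N} \<Longrightarrow> i' \<in> {1..N} \<Longrightarrow> a \<in> {0..L i} \<Longrightarrow> b \<in> {0..L i'} \<Longrightarrow>
   cpx2 (Y i) (S i a) \<noteq> cpx2 (Yt i') (S i' b)"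
proof
  assume i: "i \<in> {1..N}" and i': "i' \<in> {1..N}" and a: "a \<in> {0..L i}" and b: "b \<in> {0..L i'}"
    and e: "cpx2 (Y i) (S i a) = cpx2 (Yt i') (S i' b)"
  have "cpx2 (Y i) (S i a) \<in> comp_complexes L Y Yt S U V (False, i)" using a by (auto simp: comp_complexes_def)
  moreover have "cpx2 (Y i) (S i a) \<in> comp_complexes L Y Yt S U V (True, i')" using b e by (auto simp: comp_complexes_def)
  ultimately show False using component_complexes_unique[of "(False,i)" "(True,i')"] i i' by auto
qed

lemma Y_neq_Yt: "i \<in> {1..N} \<Longrightarrow> Y i \<noteq> Yt i"
  using Y_S_complex_neq_Yt_S[of i i 0 0] by auto

text \<open>(H2) enters the proof only through this lemma.\<close>
lemma substrate_class:
  obtains p :: "'s \<Rightarrow> nat" where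
    "\<And>i a. i \<in> {1..N} \<Longrightarrow> a \<in> {0..L i} \<Longrightarrow> p (S i a) = p (S i 0)"
    "\<And>i. i \<in> {1..N} \<Longrightarrow> p (Y i) \<noteq> p (S i 0)"
    "\<And>i. i \<in> {1..N} \<Longrightarrow> p (Yt i) \<noteq> p (S i 0)"
proof -
  obtain p :: "'s \<Rightarrow> nat" where H: "\<forall>i\<in>{1..N}. \<forall>j\<in>{1..L i}.
           (\<exists>\<alpha>\<ge>1. (\<forall>j'\<in>{0..L i}. p (S i j') = \<alpha>) \<and> p (Y i) \<noteq> \<alpha>) \<and>
           (\<exists>\<alpha>\<ge>1. (\<forall>j'\<in>{0..L i}. p (S i j') = \<alpha>) \<and> p (Yt i) \<noteq> \<alpha>)"
    using H2_network unfolding H2_def Let_def by blast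
  have cls: "(\<forall>a\<in>{0..L i}. p (S i a) = p (S i 0)) \<and> p (Y i) \<noteq> p (S i 0) \<and> p (Yt i) \<noteq> p (S i 0)"
    if i: "i \<in> {1..N}" for i
  proof -
    have "1 \<in> {1..L i}" using L_pos[OF i] by auto
    then obtain \<alpha> \<beta> where "\<forall>j'\<in>{0..L i}. p (S i j') = \<alpha>" "p (Y i) \<noteq> \<alpha>"
      "\<forall>j'\<in>{0..L i}. p (S i j') = \<beta>" "p (Yt i) \<noteq> \<beta>" using H i by blast
    thus ?thesis by auto
  qed
  show thesis by (rule that[of p]) (use cls in blast)+
qed

lemma linked_substrate_not_enzyme:
  assumes i: "i \<in> {1..N}" and i': "i' \<in> {1..N}" and a: "a \<in> {0..L i}" and b: "b \<in> {0..L i}"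
    and c: "c \<in> {0..L i'}" and link: "S i b = S i' c"
  shows "S i a \<noteq> Y i' \<and> S i a \<noteq> Yt i'"
proof -
  obtain p :: "'s \<Rightarrow> nat" where
    cls: "\<And>i a. i \<in> {1..N} \<Longrightarrow> a \<in> {0..L i} \<Longrightarrow> p (S i a) = p (S i 0)" and
    Y: "\<And>i. i \<in> {1..N} \<Longrightarrow> p (Y i) \<noteq> p (S i 0)" and
    Yt: "\<And>i. i \<in> {1..N} \<Longrightarrow> p (Yt i) \<noteq> p (S i 0)"
    using substrate_class by blast
  have "p (S i a) = p (S i' 0)"
    using cls[OF i a] cls[OF i b] cls[OF i' c] link by simp
  thus ?thesis using Y[OF i'] Yt[OF i'] by auto
qed

lemma labs_cases:
  assumes "r \<in> labs N L"
  obtains (A) i j where "i \<in> {1..N}" "j \<in> {1..L i}" "r = Ra i j"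
   | (B) i j where "i \<in> {1..N}" "j \<in> {1..L i}" "r = Rb i j"
   | (C) i j where "i \<in> {1..N}" "j \<in> {1..L i}" "r = Rc i j"
   | (TA) i j where "i \<in> {1..N}" "j \<in> {1..L i}" "r = Rta i j"
   | (TB) i j where "i \<in> {1..N}" "j \<in> {1..L i}" "r = Rtb i j"
   | (TC) i j where "i \<in> {1..N}" "j \<in> {1..L i}" "r = Rtc i j"
  using assms unfolding labs_def by blast

lemma finite_labs: "finite (labs N L)"
  unfolding labs_def by auto

lemma src_le_2: "srcF r t \<le> 2"
  by (cases r) (auto simp: cpx1_def cpx2_def)

lemma src_shape:
  assumes "r \<in> R"
  shows "(\<exists>w. srcF r = cpx1 w \<and> w \<in> intermediates N L U V) \<or>
         (\<exists>a b. srcF r = cpx2 a b \<and> a \<noteq> b \<and> a \<in> nonintermediates N L Y Yt S \<and> b \<in> nonintermediates N L Y Yt S)"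
  using assms
proof (cases rule: labs_cases)
  case (A i j)
  have e: "srcF r = cpx2 (Y i) (S i (j-1))" using A by simp
  have m: "j - 1 \<in> {0..L i}" using A by auto
  show ?thesis using e Y_neq_S[OF A(1) m] Y_nonintermediate[OF A(1)] S_nonintermediate[OF A(1) m] by blast
next
  case (B i j) thus ?thesis using U_intermediate by auto
next
  case (C i j) thus ?thesis using U_intermediate by auto
next
  case (TA i j)
  have e: "srcF r = cpx2 (Yt i) (S i j)" using TA by simp
  have m: "j \<in> {0..L i}" using TA by auto
  show ?thesis using e Yt_neq_S[OF TA(1) m] Yt_nonintermediate[OF TA(1)] S_nonintermediate[OF TA(1) m] by blast
next
  case (TB i j) thus ?thesis using V_intermediate by auto
next
  case (TC i j) thus ?thesis using V_intermediate by auto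
qed

lemma lie_coeff_sum_over:
  fixes g :: "'s complex"
  assumes A: "A \<subseteq> R" and complete: "\<And>r. r \<in> R \<Longrightarrow> srcF r \<le> g \<Longrightarrow> r \<in> A" and enabled: "\<And>r. r \<in> A \<Longrightarrow> srcF r \<le> g"
  shows "lie_coeff R srcF tgtF k c g = (\<Sum>r\<in>A. k r * (\<Sum>s\<in>UNIV. (real (tgtF r s) - real (srcF r s)) *
            ((real (g s) + 1 - real (srcF r s)) * c (pre_exp g (srcF r) s))))"
proof -
  have "lie_coeff R srcF tgtF k c g = (\<Sum>r\<in>A. if srcF r \<le> g then k r * (\<Sum>s\<in>UNIV. (real (tgtF r s) - real (srcF r s)) *
            ((real (g s) + 1 - real (srcF r s)) * c (pre_exp g (srcF r) s))) else 0)"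
    unfolding lie_coeff_def by (rule sum.mono_neutral_right[OF finite_labs A]) (use complete in auto)
  also have "\<dots> = (\<Sum>r\<in>A. k r * (\<Sum>s\<in>UNIV. (real (tgtF r s) - real (srcF r s)) *
            ((real (g s) + 1 - real (srcF r s)) * c (pre_exp g (srcF r) s))))"
    by (rule sum.cong[OF refl]) (simp add: enabled)
  finally show ?thesis .
qed

end

section \<open>The coefficients of the derivatives of s_{i,L_i}\<close>

locale component = chain_network N L Y Yt S U V
  for N :: nat and L :: "nat \<Rightarrow> nat" and Y Yt :: "nat \<Rightarrow> 's::finite" and S U V :: "nat \<Rightarrow> nat \<Rightarrow> 's" +
  fixes i :: nat
  assumes i_in: "i \<in> {1..N}"
begin

text \<open>out_coeff is the coefficient function of x_{S_{i,L_i}}, so dcoeff k n is that of its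
  n-th total derivative; ymon m t is the exponent vector of the monomial y_i^m t.\<close>
definition out_coeff :: "'s complex \<Rightarrow> real" where
  "out_coeff g = (if g = cpx1 (S i (L i)) then 1 else 0)"

definition dcoeff :: "(rlab \<Rightarrow> real) \<Rightarrow> nat \<Rightarrow> 's complex \<Rightarrow> real" where
  "dcoeff k n = (lie_coeff R srcF tgtF k ^^ n) out_coeff"

definition ymon :: "nat \<Rightarrow> 's \<Rightarrow> 's complex" where
  "ymon m t = (\<lambda>\<tau>. (if \<tau> = Y i then m else 0) + (if \<tau> = t then 1 else 0))"

definition ypow :: "nat \<Rightarrow> 's complex" where
  "ypow m = (\<lambda>\<tau>. if \<tau> = Y i then m else 0)"

lemma dcoeff_0: "dcoeff k 0 = out_coeff" by (simp add: dcoeff_def)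

lemma dcoeff_Suc: "dcoeff k (Suc n) = lie_coeff R srcF tgtF k (dcoeff k n)" by (simp add: dcoeff_def)

lemma L_i_pos: "1 \<le> L i" using L_pos[OF i_in] .

lemma reactions_in_R:
  assumes "j \<in> {1..L i}"
  shows "Ra i j \<in> R" "Rb i j \<in> R" "Rc i j \<in> R" "Rta i j \<in> R" "Rtb i j \<in> R" "Rtc i j \<in> R"
  using i_in assms unfolding labs_def by blast+

lemma poly_of_out_coeff: "poly_of 1 out_coeff = (\<lambda>x. x (S i (L i)))"
proof
  fix x
  have m: "cpx1 (S i (L i)) \<in> exps_le 1" by (simp add: exps_le_def cpx1_def)
  have "poly_of 1 out_coeff x = (\<Sum>b\<in>exps_le 1. if b = cpx1 (S i (L i)) then monom b x else 0)"
    unfolding poly_of_def out_coeff_def by (rule sum.cong) auto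
  also have "\<dots> = monom (cpx1 (S i (L i))) x" using m by (simp add: sum.delta[OF finite_exps_le])
  finally show "poly_of 1 out_coeff x = x (S i (L i))" by (simp add: monom_cpx1)
qed

lemma coeffs_in_out_coeff: "coeffs_in 1 out_coeff"
  by (simp add: coeffs_in_def out_coeff_def exps_le_def cpx1_def)

lemma total_deriv_iter_eq_poly_of: "total_deriv_iter (chain_field N L Y Yt S U V k) n (\<lambda>x. x (S i (L i))) = poly_of (1 + 2*n) (dcoeff k n) \<and>
    coeffs_in (1 + 2*n) (dcoeff k n)"
  using total_deriv_iter_poly_of[OF src_le_2 coeffs_in_out_coeff, where l=n and k=k and tg=tgtF and R=R] unfolding poly_of_out_coeff dcoeff_def chain_field_def
  by simp

lemma S_neq_Y: "j \<in> {0..L i} \<Longrightarrow> S i j \<noteq> Y i" using Y_neq_S[OF i_in] by metis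

lemma S_neq_Yt: "j \<in> {0..L i} \<Longrightarrow> S i j \<noteq> Yt i" using Yt_neq_S[OF i_in] by metis

lemma Yt_neq_Y: "Yt i \<noteq> Y i" using Y_neq_Yt[OF i_in] by metis

lemma U_neq_nonintermediate: "i' \<in> {1..N} \<Longrightarrow> j' \<in> {1..L i'} \<Longrightarrow> x \<in> nonintermediates N L Y Yt S \<Longrightarrow> U i' j' \<noteq> x"
  using intermediate_not_nonintermediate[OF U_intermediate] by metis

lemma V_neq_nonintermediate: "i' \<in> {1..N} \<Longrightarrow> j' \<in> {1..L i'} \<Longrightarrow> x \<in> nonintermediates N L Y Yt S \<Longrightarrow> V i' j' \<noteq> x"
  using intermediate_not_nonintermediate[OF V_intermediate] by metis

lemma U_neq_Y: "j \<in> {1..L i} \<Longrightarrow> U i j \<noteq> Y i" using U_neq_nonintermediate[OF i_in _ Y_nonintermediate[OF i_in]] by metis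

lemma V_neq_Y: "j \<in> {1..L i} \<Longrightarrow> V i j \<noteq> Y i" using V_neq_nonintermediate[OF i_in _ Y_nonintermediate[OF i_in]] by metis

lemma U_neq_S: "j \<in> {1..L i} \<Longrightarrow> q \<in> {0..L i} \<Longrightarrow> U i j \<noteq> S i q" using U_neq_nonintermediate[OF i_in _ S_nonintermediate[OF i_in]] by metis

lemma V_neq_S: "j \<in> {1..L i} \<Longrightarrow> q \<in> {0..L i} \<Longrightarrow> V i j \<noteq> S i q" using V_neq_nonintermediate[OF i_in _ S_nonintermediate[OF i_in]] by metis

lemma V_neq_Yt: "j \<in> {1..L i} \<Longrightarrow> V i j \<noteq> Yt i" using V_neq_nonintermediate[OF i_in _ Yt_nonintermediate[OF i_in]] by metis

lemma ymon_apply: "ymon m t \<tau> = (if \<tau> = Y i then m else 0) + (if \<tau> = t then 1 else 0)"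
  by (simp add: ymon_def)

lemma ymon_pos: "0 < ymon m t \<tau> \<longleftrightarrow> (\<tau> = Y i \<and> 0 < m) \<or> \<tau> = t"
  by (simp add: ymon_def)

lemma ymon_Y: "ymon m (Y i) = ypow (Suc m)"
  by (simp add: ymon_def ypow_def fun_eq_iff)

lemma ypow_pos: "0 < ypow m \<tau> \<longleftrightarrow> \<tau> = Y i \<and> 0 < m"
  by (simp add: ypow_def)

lemma pre_exp_ymon_cpx1: "t \<noteq> Y i \<Longrightarrow> pre_exp (ymon m t) (cpx1 t) s = ymon m s"
  by (simp add: pre_exp_def ymon_def cpx1_def fun_eq_iff)

lemma pre_exp_ymon_cpx2: "t \<noteq> Y i \<Longrightarrow> pre_exp (ymon m t) (cpx2 (Y i) t) s = ymon (m - 1) s"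
  by (simp add: pre_exp_def ymon_def cpx2_def fun_eq_iff)

lemma cpx2_Y_ymon: "cpx2 (Y i) t = ymon 1 t"
  by (simp add: cpx2_def ymon_def fun_eq_iff)

lemma cpx2_ymon_Y: "cpx2 t (Y i) = ymon 1 t"
  using cpx2_comm[of t "Y i"] cpx2_Y_ymon by metis

lemma src_not_le_ypow: "r \<in> R \<Longrightarrow> \<not> srcF r \<le> ypow m"
proof
  assume r: "r \<in> R" and le: "srcF r \<le> ypow m"
  from src_shape[OF r] show False
  proof (elim disjE exE conjE)
    fix w assume e: "srcF r = cpx1 w" and w: "w \<in> intermediates N L U V"
    have "0 < ypow m w" using le e by (simp add: cpx1_le_iff)
    hence "w = Y i" by (simp add: ypow_pos)
    thus False using intermediate_not_nonintermediate[OF w] Y_nonintermediate[OF i_in] by simp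
  next
    fix a b assume e: "srcF r = cpx2 a b" and ab: "a \<noteq> b"
    have "0 < ypow m a" "0 < ypow m b" using le e ab by (simp_all add: cpx2_le_iff)
    thus False using ab by (simp add: ypow_pos)
  qed
qed

lemma dcoeff_ypow: "dcoeff k n (ypow m) = 0"
proof (cases n)
  case 0
  have "ypow m (S i (L i)) = 0" using S_neq_Y[of "L i"] by (simp add: ypow_def)
  moreover have "cpx1 (S i (L i)) (S i (L i)) = 1" by (simp add: cpx1_def)
  ultimately have "ypow m \<noteq> cpx1 (S i (L i))" by auto
  thus ?thesis using 0 by (simp add: dcoeff_0 out_coeff_def)
next
  case (Suc n')
  have "lie_coeff R srcF tgtF k (dcoeff k n') (ypow m) = (\<Sum>r\<in>{}. k r * (\<Sum>s\<in>UNIV. (real (tgtF r s) - real (srcF r s)) *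
            ((real (ypow m s) + 1 - real (srcF r s)) * dcoeff k n' (pre_exp (ypow m) (srcF r) s))))"
    by (rule lie_coeff_sum_over) (use src_not_le_ypow in auto)
  thus ?thesis using Suc by (simp add: dcoeff_Suc)
qed

lemma dcoeff_ymon_Y: "dcoeff k n (ymon m (Y i)) = 0"
  by (simp add: ymon_Y dcoeff_ypow)

lemma src_le_ymon:
  assumes r: "r \<in> R" and t: "t \<noteq> Y i" and le: "srcF r \<le> ymon m t"
  shows "srcF r = cpx1 t \<or> (0 < m \<and> srcF r = cpx2 (Y i) t)"
  using src_shape[OF r]
proof (elim disjE exE conjE)
  fix w assume e: "srcF r = cpx1 w" and w: "w \<in> intermediates N L U V"
  have "0 < ymon m t w" using le e by (simp add: cpx1_le_iff)
  hence "w = Y i \<or> w = t" by (auto simp: ymon_pos)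
  moreover have "w \<noteq> Y i" using intermediate_not_nonintermediate[OF w] Y_nonintermediate[OF i_in] by metis
  ultimately show ?thesis using e by simp
next
  fix a b assume e: "srcF r = cpx2 a b" and ab: "a \<noteq> b"
  have "0 < ymon m t a" "0 < ymon m t b" using le e ab by (simp_all add: cpx2_le_iff)
  hence a: "(a = Y i \<and> 0 < m) \<or> a = t" and b: "(b = Y i \<and> 0 < m) \<or> b = t" by (simp_all add: ymon_pos)
  have "(a = Y i \<and> b = t \<and> 0 < m) \<or> (a = t \<and> b = Y i \<and> 0 < m)" using a b ab by auto
  thus ?thesis using e cpx2_comm by metis
qed

section \<open>Which monomials can have nonzero coefficients\<close>

text \<open>reachable n t holds whenever some y_i^m t with t \<noteq> Y_i has a nonzero coefficient in the n-th
  derivative: t lies on a chain of component i within distance n of S_{i,L_i}, or t is untracked.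
  Substrates may be shared with other components, so foreign intermediates do occur; the untracked
  ones are produced by no reaction consuming Y_i, hence their monomials only feed monomials of
  themselves and never reach component i.\<close>
definition untracked :: "'s set" where
  "untracked = {w. (\<exists>i'\<in>{1..N}. \<exists>j'\<in>{1..L i'}. w = U i' j' \<or> w = V i' j') \<and> (\<forall>q\<in>{1..L i}. w \<noteq> V i q) \<and>
              (\<forall>r\<in>R. tgtF r = cpx1 w \<longrightarrow> srcF r (Y i) = 0)}"

definition reachable :: "nat \<Rightarrow> 's \<Rightarrow> bool" where
  "reachable n t \<longleftrightarrow> (\<exists>j\<in>{0..L i}. t = S i j \<and> 2 * (L i - j) \<le> n) \<or>
              (\<exists>j\<in>{1..L i}. (t = U i j \<or> t = V i j) \<and> 2 * (L i - j) + 1 \<le> n) \<or> t \<in> untracked"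

lemma untracked_intermediate: "w \<in> untracked \<Longrightarrow> w \<in> intermediates N L U V"
  unfolding untracked_def using U_intermediate V_intermediate by blast

lemma U_untracked:
  assumes i': "i' \<in> {1..N}" and j': "j' \<in> {1..L i'}" and c1: "Y i' \<noteq> Y i" and c2: "S i' (j' - 1) \<noteq> Y i"
  shows "U i' j' \<in> untracked"
proof -
  have "\<forall>r\<in>R. tgtF r = cpx1 (U i' j') \<longrightarrow> srcF r (Y i) = 0"
  proof (intro ballI impI)
    fix r assume r: "r \<in> R" and e: "tgtF r = cpx1 (U i' j')"
    from r show "srcF r (Y i) = 0"
    proof (cases rule: labs_cases)
      case (A a b)
      hence "U a b = U i' j'" using e by (simp add: cpx1_eq_iff)
      hence "a = i' \<and> b = j'" using U_eq_iff[OF A(1) i' A(2) j'] by simp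
      thus ?thesis using A c1 c2 by (simp add: cpx2_def)
    next
      case (TA a b)
      hence "V a b = U i' j'" using e by (simp add: cpx1_eq_iff)
      thus ?thesis using U_neq_V[OF i' TA(1) j' TA(2)] by metis
    qed (use e cpx1_ne_cpx2 in \<open>metis tgt.simps\<close>)+
  qed
  moreover have "\<forall>q\<in>{1..L i}. U i' j' \<noteq> V i q" using U_neq_V[OF i' i_in j'] by blast
  ultimately show ?thesis unfolding untracked_def using i' j' by blast
qed

lemma V_untracked:
  assumes i': "i' \<in> {1..N}" and j': "j' \<in> {1..L i'}" and ii: "i' \<noteq> i" and c1: "Yt i' \<noteq> Y i" and c2: "S i' j' \<noteq> Y i"
  shows "V i' j' \<in> untracked"
proof -
  have "\<forall>r\<in>R. tgtF r = cpx1 (V i' j') \<longrightarrow> srcF r (Y i) = 0"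
  proof (intro ballI impI)
    fix r assume r: "r \<in> R" and e: "tgtF r = cpx1 (V i' j')"
    from r show "srcF r (Y i) = 0"
    proof (cases rule: labs_cases)
      case (A a b)
      hence "U a b = V i' j'" using e by (simp add: cpx1_eq_iff)
      thus ?thesis using U_neq_V[OF A(1) i' A(2) j'] by metis
    next
      case (TA a b)
      hence "V a b = V i' j'" using e by (simp add: cpx1_eq_iff)
      hence "a = i' \<and> b = j'" using V_eq_iff[OF TA(1) i' TA(2) j'] by simp
      thus ?thesis using TA c1 c2 by (simp add: cpx2_def)
    qed (use e cpx1_ne_cpx2 in \<open>metis tgt.simps\<close>)+
  qed
  moreover have "\<forall>q\<in>{1..L i}. V i' j' \<noteq> V i q" using V_eq_iff[OF i' i_in j'] ii by blast
  ultimately show ?thesis unfolding untracked_def using i' j' by blast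
qed

lemma foreign_U_untracked:
  assumes i': "i' \<in> {1..N}" and ii: "i' \<noteq> i" and j': "j' \<in> {1..L i'}" and jj: "jj = j' - 1 \<or> jj = j'"
    and j0: "j0 \<in> {0..L i}" and link: "S i j0 = Y i' \<or> S i j0 = S i' jj"
  shows "U i' j' \<in> untracked"
proof (rule U_untracked[OF i' j'])
  have jjr: "jj \<in> {0..L i'}" and m'r: "j' - 1 \<in> {0..L i'}" using j' jj by auto
  show "Y i' \<noteq> Y i"
  proof
    assume yy: "Y i' = Y i"
    hence "S i j0 = S i' jj" using link S_neq_Y[OF j0] by metis
    hence "cpx2 (Y i) (S i j0) = cpx2 (Y i') (S i' jj)" using yy by simp
    thus False using Y_S_complex_eq[OF i_in i' j0 jjr] ii by metis
  qed
  show "S i' (j' - 1) \<noteq> Y i"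
  proof
    assume sy: "S i' (j' - 1) = Y i"
    from link show False
    proof
      assume "S i j0 = Y i'"
      hence "cpx2 (Y i) (S i j0) = cpx2 (Y i') (S i' (j' - 1))" using sy by (simp add: cpx2_eq_iff)
      thus False using Y_S_complex_eq[OF i_in i' j0 m'r] ii by metis
    next
      assume a: "S i j0 = S i' jj"
      show False
      proof (cases "jj = j' - 1")
        case True thus False using a sy S_neq_Y[OF j0] by metis
      next
        case False
        hence "jj = j'" using jj by metis
        thus False using linked_substrate_not_enzyme[OF i' i_in m'r jjr j0] sy a by metis
      qed
    qed
  qed
qed

lemma foreign_V_untracked:
  assumes i': "i' \<in> {1..N}" and ii: "i' \<noteq> i" and j': "j' \<in> {1..L i'}" and jj: "jj = j' - 1 \<or> jj = j'"
    and j0: "j0 \<in> {0..L i}" and link: "S i j0 = Yt i' \<or> S i j0 = S i' jj"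
  shows "V i' j' \<in> untracked"
proof (rule V_untracked[OF i' j' ii])
  have jjr: "jj \<in> {0..L i'}" and jr: "j' \<in> {0..L i'}" using j' jj by auto
  show "Yt i' \<noteq> Y i"
  proof
    assume yy: "Yt i' = Y i"
    hence "S i j0 = S i' jj" using link S_neq_Y[OF j0] by metis
    hence "cpx2 (Y i) (S i j0) = cpx2 (Yt i') (S i' jj)" using yy by simp
    thus False using Y_S_complex_neq_Yt_S[OF i_in i' j0 jjr] by metis
  qed
  show "S i' j' \<noteq> Y i"
  proof
    assume sy: "S i' j' = Y i"
    from link show False
    proof
      assume "S i j0 = Yt i'"
      hence "cpx2 (Y i) (S i j0) = cpx2 (Yt i') (S i' j')" using sy by (simp add: cpx2_eq_iff)
      thus False using Y_S_complex_neq_Yt_S[OF i_in i' j0 jr] by metis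
    next
      assume a: "S i j0 = S i' jj"
      show False
      proof (cases "jj = j'")
        case True thus False using a sy S_neq_Y[OF j0] by metis
      next
        case False
        hence "jj = j' - 1" using jj by metis
        thus False using linked_substrate_not_enzyme[OF i' i_in jr jjr j0] sy a by metis
      qed
    qed
  qed
qed

lemma reachable_S: "j \<in> {0..L i} \<Longrightarrow> 2 * (L i - j) \<le> n \<Longrightarrow> reachable n (S i j)" unfolding reachable_def by blast

lemma reachable_U: "j \<in> {1..L i} \<Longrightarrow> 2 * (L i - j) + 1 \<le> n \<Longrightarrow> reachable n (U i j)" unfolding reachable_def by blast

lemma reachable_V: "j \<in> {1..L i} \<Longrightarrow> 2 * (L i - j) + 1 \<le> n \<Longrightarrow> reachable n (V i j)" unfolding reachable_def by blast

lemma reachable_untracked: "w \<in> untracked \<Longrightarrow> reachable n w" unfolding reachable_def by blast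

lemma reachable_cases:
  assumes "reachable n s"
  obtains (at_S) j0 where "j0 \<in> {0..L i}" "s = S i j0" "2 * (L i - j0) \<le> n"
   | (at_U) j0 where "j0 \<in> {1..L i}" "s = U i j0" "2 * (L i - j0) + 1 \<le> n"
   | (at_V) j0 where "j0 \<in> {1..L i}" "s = V i j0" "2 * (L i - j0) + 1 \<le> n"
   | (untr) "s \<in> untracked"
  using assms unfolding reachable_def by blast

lemma reachable_step_Ra:
  assumes i': "i' \<in> {1..N}" and j': "j' \<in> {1..L i'}" and r: "r = Ra i' j'"
    and t: "t \<noteq> Y i" and s: "s \<noteq> Y i" and le: "srcF r \<le> ymon m t"
    and d: "tgtF r s \<noteq> srcF r s" and ok: "reachable n s"
  shows "reachable (Suc n) t"
proof -
  define m' where "m' = j' - 1"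
  have m': "m' \<in> {0..L i'}" using j' by (auto simp: m'_def)
  have sr: "srcF r = cpx2 (Y i') (S i' m')" and tg: "tgtF r = cpx1 (U i' j')" using r by (simp_all add: m'_def)
  have rR: "r \<in> R" using r i' j' unfolding labs_def by blast
  have "srcF r = cpx1 t \<or> (0 < m \<and> srcF r = cpx2 (Y i) t)" by (rule src_le_ymon[OF rR t le])
  hence e: "cpx2 (Y i') (S i' m') = cpx2 (Y i) t" using sr cpx1_ne_cpx2 by metis
  hence sub: "(Y i' = Y i \<and> S i' m' = t) \<or> (Y i' = t \<and> S i' m' = Y i)" by (simp add: cpx2_eq_iff)
  have sp: "s = U i' j' \<or> s = Y i' \<or> s = S i' m'" by (rule changed_species_cpx1_cpx2[OF d tg sr])
  have st: "s = U i' j' \<or> s = t" using sp sub s by blast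
  have tni: "t \<in> nonintermediates N L Y Yt S" using sub Y_nonintermediate[OF i'] S_nonintermediate[OF i' m'] by metis
  have y1: "0 < srcF r (Y i)" using e sr by (simp add: cpx2_def)
  from ok show ?thesis
  proof (cases rule: reachable_cases)
    case (at_S j0)
    have sU: "s \<noteq> U i' j'" using U_neq_nonintermediate[OF i' j' S_nonintermediate[OF i_in at_S(1)]] at_S(2) by metis
    hence ts: "t = S i j0" using st at_S(2) by metis
    from sub show ?thesis
    proof
      assume a: "Y i' = Y i \<and> S i' m' = t"
      have "2 * (L i - j0) \<le> Suc n" using at_S(3) by simp
      thus ?thesis using reachable_S[OF at_S(1)] ts by simp
    next
      assume a: "Y i' = t \<and> S i' m' = Y i"
      hence "cpx2 (Y i) (S i j0) = cpx2 (Y i') (S i' m')" using ts by (simp add: cpx2_eq_iff)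
      hence "i = i' \<and> j0 = m'" by (rule Y_S_complex_eq[OF i_in i' at_S(1) m'])
      hence "Y i = S i j0" using a ts by metis
      thus ?thesis using S_neq_Y[OF at_S(1)] by metis
    qed
  next
    case (at_U j0)
    have "s \<noteq> t" using at_U(2) U_neq_nonintermediate[OF i_in at_U(1) tni] by metis
    hence "U i j0 = U i' j'" using st at_U(2) by simp
    hence ii: "i = i' \<and> j0 = j'" using U_eq_iff[OF i_in i' at_U(1) j'] by blast
    from sub show ?thesis
    proof
      assume a: "Y i' = Y i \<and> S i' m' = t"
      hence "t = S i' (j' - 1)" by (simp add: m'_def)
      hence "t = S i (j0 - 1)" using ii by metis
      moreover have "j0 - 1 \<in> {0..L i}" using at_U(1) by auto
      moreover have "2 * (L i - (j0 - 1)) \<le> Suc n" using at_U(1,3) by auto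
      ultimately show ?thesis using reachable_S by metis
    next
      assume a: "Y i' = t \<and> S i' m' = Y i"
      hence "S i m' = Y i" using ii by metis
      moreover have "m' \<in> {0..L i}" using m' ii by metis
      ultimately show ?thesis using S_neq_Y by metis
    qed
  next
    case (at_V j0)
    have "s \<noteq> t" using at_V(2) V_neq_nonintermediate[OF i_in at_V(1) tni] by metis
    hence "V i j0 = U i' j'" using st at_V(2) by simp
    thus ?thesis using U_neq_V[OF i' i_in j' at_V(1)] by metis
  next
    case untr
    have "s \<noteq> t" using untracked_intermediate[OF untr] intermediate_not_nonintermediate tni by metis
    hence "s = U i' j'" using st by simp
    hence "srcF r (Y i) = 0" using untr rR tg unfolding untracked_def by blast
    thus ?thesis using y1 by simp
  qed
qed

lemma reachable_step_Rbc:
  assumes i': "i' \<in> {1..N}" and j': "j' \<in> {1..L i'}" and jj: "jj = j' - 1 \<or> jj = j'"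
    and sr: "srcF r = cpx1 (U i' j')" and tg: "tgtF r = cpx2 (Y i') (S i' jj)"
    and rR: "r \<in> R"
    and t: "t \<noteq> Y i" and s: "s \<noteq> Y i" and le: "srcF r \<le> ymon m t"
    and d: "tgtF r s \<noteq> srcF r s" and ok: "reachable n s"
  shows "reachable (Suc n) t"
proof -
  have jjr: "jj \<in> {0..L i'}" using j' jj by auto
  have "srcF r = cpx1 t \<or> (0 < m \<and> srcF r = cpx2 (Y i) t)" by (rule src_le_ymon[OF rR t le])
  hence "cpx1 (U i' j') = cpx1 t" using sr cpx1_ne_cpx2 by metis
  hence tt: "t = U i' j'" by (simp add: cpx1_eq_iff)
  have sp: "s = U i' j' \<or> s = Y i' \<or> s = S i' jj" by (rule changed_species_cpx2_cpx1[OF d tg sr])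
  from ok show ?thesis
  proof (cases rule: reachable_cases)
    case (at_S j0)
    have sU: "s \<noteq> U i' j'" using U_neq_nonintermediate[OF i' j' S_nonintermediate[OF i_in at_S(1)]] at_S(2) by metis
    hence sp2: "S i j0 = Y i' \<or> S i j0 = S i' jj" using sp at_S(2) by metis
    show ?thesis
    proof (cases "i' = i")
      case True
      have "S i j0 \<noteq> Y i" using S_neq_Y[OF at_S(1)] by metis
      hence "S i j0 = S i jj" using sp2 True by metis
      hence "j0 = jj" using S_eq_iff[OF i_in at_S(1)] jjr True by metis
      hence "2 * (L i - j') + 1 \<le> Suc n" using jj at_S(3) j' True by auto
      moreover have "j' \<in> {1..L i}" using j' True by simp
      ultimately show ?thesis using tt True reachable_U by metis
    next
      case False
      show ?thesis using foreign_U_untracked[OF i' False j' jj at_S(1) sp2] tt reachable_untracked by metis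
    qed
  next
    case (at_U j0)
    have "s \<noteq> Y i'" using U_neq_nonintermediate[OF i_in at_U(1) Y_nonintermediate[OF i']] at_U(2) by metis
    moreover have "s \<noteq> S i' jj" using U_neq_nonintermediate[OF i_in at_U(1) S_nonintermediate[OF i' jjr]] at_U(2) by metis
    ultimately have "s = t" using sp tt by metis
    thus ?thesis using at_U reachable_U[OF at_U(1)] by simp
  next
    case (at_V j0)
    have "s \<noteq> Y i'" using V_neq_nonintermediate[OF i_in at_V(1) Y_nonintermediate[OF i']] at_V(2) by metis
    moreover have "s \<noteq> S i' jj" using V_neq_nonintermediate[OF i_in at_V(1) S_nonintermediate[OF i' jjr]] at_V(2) by metis
    ultimately have "V i j0 = U i' j'" using sp at_V(2) by metis
    thus ?thesis using U_neq_V[OF i' i_in j' at_V(1)] by metis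
  next
    case untr
    have "s \<noteq> Y i'" using intermediate_not_nonintermediate[OF untracked_intermediate[OF untr]] Y_nonintermediate[OF i'] by metis
    moreover have "s \<noteq> S i' jj" using intermediate_not_nonintermediate[OF untracked_intermediate[OF untr]] S_nonintermediate[OF i' jjr] by metis
    ultimately have "s = t" using sp tt by metis
    thus ?thesis using untr reachable_untracked by metis
  qed
qed

lemma reachable_step_Rta:
  assumes i': "i' \<in> {1..N}" and j': "j' \<in> {1..L i'}" and r: "r = Rta i' j'"
    and t: "t \<noteq> Y i" and s: "s \<noteq> Y i" and le: "srcF r \<le> ymon m t"
    and d: "tgtF r s \<noteq> srcF r s" and ok: "reachable n s"
  shows "reachable (Suc n) t"
proof -
  have jr: "j' \<in> {0..L i'}" using j' by auto
  have sr: "srcF r = cpx2 (Yt i') (S i' j')" and tg: "tgtF r = cpx1 (V i' j')" using r by simp_all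
  have rR: "r \<in> R" using r i' j' unfolding labs_def by blast
  have "srcF r = cpx1 t \<or> (0 < m \<and> srcF r = cpx2 (Y i) t)" by (rule src_le_ymon[OF rR t le])
  hence e: "cpx2 (Yt i') (S i' j') = cpx2 (Y i) t" using sr cpx1_ne_cpx2 by metis
  hence sub: "(Yt i' = Y i \<and> S i' j' = t) \<or> (Yt i' = t \<and> S i' j' = Y i)" by (simp add: cpx2_eq_iff)
  have sp: "s = V i' j' \<or> s = Yt i' \<or> s = S i' j'" by (rule changed_species_cpx1_cpx2[OF d tg sr])
  have st: "s = V i' j' \<or> s = t" using sp sub s by blast
  have tni: "t \<in> nonintermediates N L Y Yt S" using sub Yt_nonintermediate[OF i'] S_nonintermediate[OF i' jr] by metis
  have y1: "0 < srcF r (Y i)" using e sr by (simp add: cpx2_def)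
  from ok show ?thesis
  proof (cases rule: reachable_cases)
    case (at_S j0)
    have "s \<noteq> V i' j'" using V_neq_nonintermediate[OF i' j' S_nonintermediate[OF i_in at_S(1)]] at_S(2) by metis
    hence ts: "t = S i j0" using st at_S(2) by metis
    have "cpx2 (Y i) (S i j0) = cpx2 (Yt i') (S i' j')" using e ts by metis
    thus ?thesis using Y_S_complex_neq_Yt_S[OF i_in i' at_S(1) jr] by metis
  next
    case (at_U j0)
    have "s \<noteq> t" using at_U(2) U_neq_nonintermediate[OF i_in at_U(1) tni] by metis
    hence "U i j0 = V i' j'" using st at_U(2) by metis
    thus ?thesis using U_neq_V[OF i_in i' at_U(1) j'] by metis
  next
    case (at_V j0)
    have "s \<noteq> t" using at_V(2) V_neq_nonintermediate[OF i_in at_V(1) tni] by metis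
    hence "V i j0 = V i' j'" using st at_V(2) by metis
    hence ii: "i = i' \<and> j0 = j'" using V_eq_iff[OF i_in i' at_V(1) j'] by blast
    from sub show ?thesis
    proof
      assume "Yt i' = Y i \<and> S i' j' = t" thus ?thesis using ii Yt_neq_Y by metis
    next
      assume "Yt i' = t \<and> S i' j' = Y i"
      hence "S i j0 = Y i" using ii by metis
      thus ?thesis using S_neq_Y at_V(1) by auto
    qed
  next
    case untr
    have "s \<noteq> t" using untracked_intermediate[OF untr] intermediate_not_nonintermediate tni by metis
    hence "s = V i' j'" using st by metis
    hence "srcF r (Y i) = 0" using untr rR tg unfolding untracked_def by blast
    thus ?thesis using y1 by simp
  qed
qed

lemma reachable_step_Rtbc:
  assumes i': "i' \<in> {1..N}" and j': "j' \<in> {1..L i'}" and jj: "jj = j' - 1 \<or> jj = j'"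
    and sr: "srcF r = cpx1 (V i' j')" and tg: "tgtF r = cpx2 (Yt i') (S i' jj)"
    and rR: "r \<in> R"
    and t: "t \<noteq> Y i" and s: "s \<noteq> Y i" and le: "srcF r \<le> ymon m t"
    and d: "tgtF r s \<noteq> srcF r s" and ok: "reachable n s"
  shows "reachable (Suc n) t"
proof -
  have jjr: "jj \<in> {0..L i'}" using j' jj by auto
  have "srcF r = cpx1 t \<or> (0 < m \<and> srcF r = cpx2 (Y i) t)" by (rule src_le_ymon[OF rR t le])
  hence "cpx1 (V i' j') = cpx1 t" using sr cpx1_ne_cpx2 by metis
  hence tt: "t = V i' j'" by (simp add: cpx1_eq_iff)
  have sp: "s = V i' j' \<or> s = Yt i' \<or> s = S i' jj" by (rule changed_species_cpx2_cpx1[OF d tg sr])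
  from ok show ?thesis
  proof (cases rule: reachable_cases)
    case (at_S j0)
    have sU: "s \<noteq> V i' j'" using V_neq_nonintermediate[OF i' j' S_nonintermediate[OF i_in at_S(1)]] at_S(2) by metis
    hence sp2: "S i j0 = Yt i' \<or> S i j0 = S i' jj" using sp at_S(2) by metis
    show ?thesis
    proof (cases "i' = i")
      case True
      have "S i j0 \<noteq> Yt i" using S_neq_Yt[OF at_S(1)] by metis
      hence "S i j0 = S i jj" using sp2 True by metis
      hence "j0 = jj" using S_eq_iff[OF i_in at_S(1)] jjr True by metis
      hence "2 * (L i - j') + 1 \<le> Suc n" using jj at_S(3) j' True by auto
      moreover have "j' \<in> {1..L i}" using j' True by simp
      ultimately show ?thesis using tt True reachable_V by metis
    next
      case False
      show ?thesis using foreign_V_untracked[OF i' False j' jj at_S(1) sp2] tt reachable_untracked by metis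
    qed
  next
    case (at_U j0)
    have "s \<noteq> Yt i'" using U_neq_nonintermediate[OF i_in at_U(1) Yt_nonintermediate[OF i']] at_U(2) by metis
    moreover have "s \<noteq> S i' jj" using U_neq_nonintermediate[OF i_in at_U(1) S_nonintermediate[OF i' jjr]] at_U(2) by metis
    ultimately have "U i j0 = V i' j'" using sp at_U(2) by metis
    thus ?thesis using U_neq_V[OF i_in i' at_U(1) j'] by metis
  next
    case (at_V j0)
    have "s \<noteq> Yt i'" using V_neq_nonintermediate[OF i_in at_V(1) Yt_nonintermediate[OF i']] at_V(2) by metis
    moreover have "s \<noteq> S i' jj" using V_neq_nonintermediate[OF i_in at_V(1) S_nonintermediate[OF i' jjr]] at_V(2) by metis
    ultimately have "s = t" using sp tt by metis
    thus ?thesis using at_V reachable_V[OF at_V(1)] by simp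
  next
    case untr
    have "s \<noteq> Yt i'" using intermediate_not_nonintermediate[OF untracked_intermediate[OF untr]] Yt_nonintermediate[OF i'] by metis
    moreover have "s \<noteq> S i' jj" using intermediate_not_nonintermediate[OF untracked_intermediate[OF untr]] S_nonintermediate[OF i' jjr] by metis
    ultimately have "s = t" using sp tt by metis
    thus ?thesis using untr reachable_untracked by metis
  qed
qed

lemma reachable_step:
  assumes r: "r \<in> R" and t: "t \<noteq> Y i" and s: "s \<noteq> Y i" and le: "srcF r \<le> ymon m t"
    and d: "tgtF r s \<noteq> srcF r s" and ok: "reachable n s"
  shows "reachable (Suc n) t"
  using r
proof (cases rule: labs_cases)
  case (A a b) thus ?thesis using reachable_step_Ra[OF A t s le d ok] by simp
next
  case (B a b) thus ?thesis using reachable_step_Rbc[of a b "b - 1" r] r t s le d ok by simp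
next
  case (C a b) thus ?thesis using reachable_step_Rbc[of a b b r] r t s le d ok by simp
next
  case (TA a b) thus ?thesis using reachable_step_Rta[OF TA t s le d ok] by simp
next
  case (TB a b) thus ?thesis using reachable_step_Rtbc[of a b b r] r t s le d ok by simp
next
  case (TC a b) thus ?thesis using reachable_step_Rtbc[of a b "b - 1" r] r t s le d ok by simp
qed

lemma dcoeff_nonzero_reachable: "t \<noteq> Y i \<Longrightarrow> dcoeff k n (ymon m t) \<noteq> 0 \<Longrightarrow> reachable n t"
proof (induction n arbitrary: m t)
  case 0
  hence e: "ymon m t = cpx1 (S i (L i))" by (simp add: dcoeff_0 out_coeff_def split: if_splits)
  have "0 < ymon m t t" by (simp add: ymon_pos)
  hence "0 < cpx1 (S i (L i)) t" using e by simp
  hence "t = S i (L i)" by (simp add: cpx1_pos)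
  thus ?case using reachable_S[of "L i" 0] by simp
next
  case (Suc n)
  let ?g = "ymon m t"
  have "lie_coeff R srcF tgtF k (dcoeff k n) ?g \<noteq> 0" using Suc.prems by (simp add: dcoeff_Suc)
  then obtain r where rR: "r \<in> R" and nz: "(if srcF r \<le> ?g then k r * (\<Sum>s\<in>UNIV. (real (tgtF r s) - real (srcF r s)) *
      ((real (?g s) + 1 - real (srcF r s)) * dcoeff k n (pre_exp ?g (srcF r) s))) else 0) \<noteq> 0"
    unfolding lie_coeff_def using sum.not_neutral_contains_not_neutral by blast
  hence le: "srcF r \<le> ?g" and "(\<Sum>s\<in>UNIV. (real (tgtF r s) - real (srcF r s)) *
      ((real (?g s) + 1 - real (srcF r s)) * dcoeff k n (pre_exp ?g (srcF r) s))) \<noteq> 0"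
    by (auto split: if_splits)
  then obtain s where nz2: "(real (tgtF r s) - real (srcF r s)) *
      ((real (?g s) + 1 - real (srcF r s)) * dcoeff k n (pre_exp ?g (srcF r) s)) \<noteq> 0"
    using sum.not_neutral_contains_not_neutral by blast
  hence d: "tgtF r s \<noteq> srcF r s" and c: "dcoeff k n (pre_exp ?g (srcF r) s) \<noteq> 0" by auto
  have "\<exists>m'. pre_exp ?g (srcF r) s = ymon m' s"
    using src_le_ymon[OF rR Suc.prems(1) le] pre_exp_ymon_cpx1[OF Suc.prems(1)] pre_exp_ymon_cpx2[OF Suc.prems(1)] by metis
  then obtain m' where "dcoeff k n (ymon m' s) \<noteq> 0" using c by metis
  moreover hence "s \<noteq> Y i" using dcoeff_ymon_Y by metis
  ultimately have "reachable n s" using Suc.IH by blast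
  thus ?case using reachable_step[OF rR Suc.prems(1) \<open>s \<noteq> Y i\<close> le d] by blast
qed

lemma dcoeff_unreachable: "t \<noteq> Y i \<Longrightarrow> \<not> reachable n t \<Longrightarrow> dcoeff k n (ymon m t) = 0"
  using dcoeff_nonzero_reachable by blast

lemma S_not_reachable: assumes j: "j \<in> {0..L i}" and n: "n < 2 * (L i - j)" shows "\<not> reachable n (S i j)"
proof
  assume "reachable n (S i j)"
  thus False
  proof (cases rule: reachable_cases)
    case (at_S j0) thus False using S_eq_iff[OF i_in j at_S(1)] n by auto
  next
    case (at_U j0) thus False using U_neq_nonintermediate[OF i_in at_U(1) S_nonintermediate[OF i_in j]] by metis
  next
    case (at_V j0) thus False using V_neq_nonintermediate[OF i_in at_V(1) S_nonintermediate[OF i_in j]] by metis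
  next
    case untr thus False using intermediate_not_nonintermediate[OF untracked_intermediate[OF untr]] S_nonintermediate[OF i_in j] by metis
  qed
qed

lemma U_not_untracked: assumes j: "j \<in> {1..L i}" shows "U i j \<notin> untracked"
proof
  assume D: "U i j \<in> untracked"
  have rR: "Ra i j \<in> R" using i_in j unfolding labs_def by blast
  have "srcF (Ra i j) (Y i) = 0" using D rR unfolding untracked_def by auto
  thus False by (simp add: cpx2_def)
qed

lemma U_not_reachable: assumes j: "j \<in> {1..L i}" and n: "n < 2 * (L i - j) + 1" shows "\<not> reachable n (U i j)"
proof
  assume "reachable n (U i j)"
  thus False
  proof (cases rule: reachable_cases)
    case (at_S j0) thus False using U_neq_nonintermediate[OF i_in j S_nonintermediate[OF i_in at_S(1)]] by metis
  next
    case (at_U j0) thus False using U_eq_iff[OF i_in i_in j at_U(1)] n by auto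
  next
    case (at_V j0) thus False using U_neq_V[OF i_in i_in j at_V(1)] by metis
  next
    case untr thus False using U_not_untracked[OF j] by simp
  qed
qed

lemma V_not_reachable: assumes j: "j \<in> {1..L i}" and n: "n < 2 * (L i - j) + 1" shows "\<not> reachable n (V i j)"
proof
  assume "reachable n (V i j)"
  thus False
  proof (cases rule: reachable_cases)
    case (at_S j0) thus False using V_neq_nonintermediate[OF i_in j S_nonintermediate[OF i_in at_S(1)]] by metis
  next
    case (at_U j0) thus False using U_neq_V[OF i_in i_in at_U(1) j] by metis
  next
    case (at_V j0) thus False using V_eq_iff[OF i_in i_in j at_V(1)] n by auto
  next
    case untr thus False using j unfolding untracked_def by blast
  qed
qed

lemma Yt_not_reachable: "\<not> reachable n (Yt i)"
proof
  assume "reachable n (Yt i)"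
  thus False
  proof (cases rule: reachable_cases)
    case (at_S j0) thus False using S_neq_Yt[OF at_S(1)] by metis
  next
    case (at_U j0) thus False using U_neq_nonintermediate[OF i_in at_U(1) Yt_nonintermediate[OF i_in]] by metis
  next
    case (at_V j0) thus False using V_neq_nonintermediate[OF i_in at_V(1) Yt_nonintermediate[OF i_in]] by metis
  next
    case untr thus False using intermediate_not_nonintermediate[OF untracked_intermediate[OF untr]] Yt_nonintermediate[OF i_in] by metis
  qed
qed

lemma lie_sum_ymon_cpx1:
  assumes t: "t \<noteq> Y i"
  shows "(\<Sum>s\<in>UNIV. (real (cpx2 p q s) - real (cpx1 t s)) *
      ((real (ymon m t s) + 1 - real (cpx1 t s)) * dcoeff k n (pre_exp (ymon m t) (cpx1 t) s))) =
    (real (ymon m t p) + 1 - real (cpx1 t p)) * dcoeff k n (ymon m p) +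
    (real (ymon m t q) + 1 - real (cpx1 t q)) * dcoeff k n (ymon m q) -
    (real (ymon m t t) + 1 - real (cpx1 t t)) * dcoeff k n (ymon m t)"
  unfolding sum_delta_split sum_cpx1 sum_cpx2 pre_exp_ymon_cpx1[OF t] ..

lemma lie_sum_ymon_cpx2:
  assumes t: "t \<noteq> Y i"
  shows "(\<Sum>s\<in>UNIV. (real (cpx1 w s) - real (cpx2 (Y i) t s)) *
      ((real (ymon m t s) + 1 - real (cpx2 (Y i) t s)) * dcoeff k n (pre_exp (ymon m t) (cpx2 (Y i) t) s))) =
    (real (ymon m t w) + 1 - real (cpx2 (Y i) t w)) * dcoeff k n (ymon (m - 1) w) -
    ((real (ymon m t (Y i)) + 1 - real (cpx2 (Y i) t (Y i))) * dcoeff k n (ymon (m - 1) (Y i)) +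
    (real (ymon m t t) + 1 - real (cpx2 (Y i) t t)) * dcoeff k n (ymon (m - 1) t))"
  unfolding sum_delta_split sum_cpx1 sum_cpx2 pre_exp_ymon_cpx2[OF t] ..

lemma src_le_ymon_U:
  assumes j: "j \<in> {1..L i}" and r: "r \<in> R" and le: "srcF r \<le> ymon m (U i j)"
  shows "r \<in> {Rb i j, Rc i j}"
proof -
  have "srcF r = cpx1 (U i j) \<or> (0 < m \<and> srcF r = cpx2 (Y i) (U i j))" by (rule src_le_ymon[OF r U_neq_Y[OF j] le])
  moreover have "srcF r \<noteq> cpx2 (Y i) (U i j)"
    using src_shape[OF r]
  proof (elim disjE exE conjE)
    fix w assume "srcF r = cpx1 w" thus ?thesis using cpx1_ne_cpx2 by metis
  next
    fix a b assume e: "srcF r = cpx2 a b" and a: "a \<in> nonintermediates N L Y Yt S" and b: "b \<in> nonintermediates N L Y Yt S"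
    show ?thesis
    proof
      assume "srcF r = cpx2 (Y i) (U i j)"
      hence "U i j = a \<or> U i j = b" using e by (auto simp: cpx2_eq_iff)
      thus False using U_neq_nonintermediate[OF i_in j a] U_neq_nonintermediate[OF i_in j b] by metis
    qed
  qed
  ultimately have e: "srcF r = cpx1 (U i j)" by metis
  from r show ?thesis
  proof (cases rule: labs_cases)
    case (B a b)
    hence "U a b = U i j" using e by (simp add: cpx1_eq_iff)
    thus ?thesis using U_eq_iff[OF B(1) i_in B(2) j] B by simp
  next
    case (C a b)
    hence "U a b = U i j" using e by (simp add: cpx1_eq_iff)
    thus ?thesis using U_eq_iff[OF C(1) i_in C(2) j] C by simp
  next
    case (TB a b)
    hence "V a b = U i j" using e by (simp add: cpx1_eq_iff)
    thus ?thesis using U_neq_V[OF i_in TB(1) j TB(2)] by metis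
  next
    case (TC a b)
    hence "V a b = U i j" using e by (simp add: cpx1_eq_iff)
    thus ?thesis using U_neq_V[OF i_in TC(1) j TC(2)] by metis
  qed (use e cpx1_ne_cpx2 in \<open>metis src.simps\<close>)+
qed

lemma src_le_ymon_V:
  assumes j: "j \<in> {1..L i}" and r: "r \<in> R" and le: "srcF r \<le> ymon m (V i j)"
  shows "r \<in> {Rtb i j, Rtc i j}"
proof -
  have "srcF r = cpx1 (V i j) \<or> (0 < m \<and> srcF r = cpx2 (Y i) (V i j))" by (rule src_le_ymon[OF r V_neq_Y[OF j] le])
  moreover have "srcF r \<noteq> cpx2 (Y i) (V i j)"
    using src_shape[OF r]
  proof (elim disjE exE conjE)
    fix w assume "srcF r = cpx1 w" thus ?thesis using cpx1_ne_cpx2 by metis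
  next
    fix a b assume e: "srcF r = cpx2 a b" and a: "a \<in> nonintermediates N L Y Yt S" and b: "b \<in> nonintermediates N L Y Yt S"
    show ?thesis
    proof
      assume "srcF r = cpx2 (Y i) (V i j)"
      hence "V i j = a \<or> V i j = b" using e by (auto simp: cpx2_eq_iff)
      thus False using V_neq_nonintermediate[OF i_in j a] V_neq_nonintermediate[OF i_in j b] by metis
    qed
  qed
  ultimately have e: "srcF r = cpx1 (V i j)" by metis
  from r show ?thesis
  proof (cases rule: labs_cases)
    case (B a b)
    hence "U a b = V i j" using e by (simp add: cpx1_eq_iff)
    thus ?thesis using U_neq_V[OF B(1) i_in B(2) j] by metis
  next
    case (C a b)
    hence "U a b = V i j" using e by (simp add: cpx1_eq_iff)
    thus ?thesis using U_neq_V[OF C(1) i_in C(2) j] by metis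
  next
    case (TB a b)
    hence "V a b = V i j" using e by (simp add: cpx1_eq_iff)
    thus ?thesis using V_eq_iff[OF TB(1) i_in TB(2) j] TB by simp
  next
    case (TC a b)
    hence "V a b = V i j" using e by (simp add: cpx1_eq_iff)
    thus ?thesis using V_eq_iff[OF TC(1) i_in TC(2) j] TC by simp
  qed (use e cpx1_ne_cpx2 in \<open>metis src.simps\<close>)+
qed

lemma src_le_ymon_S:
  assumes q: "q \<in> {0..L i}" and r: "r \<in> R" and le: "srcF r \<le> ymon m (S i q)"
  shows "0 < m \<and> q < L i \<and> r = Ra i (Suc q)"
proof -
  have "srcF r = cpx1 (S i q) \<or> (0 < m \<and> srcF r = cpx2 (Y i) (S i q))" by (rule src_le_ymon[OF r S_neq_Y[OF q] le])
  moreover have "srcF r \<noteq> cpx1 (S i q)"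
    using src_shape[OF r]
  proof (elim disjE exE conjE)
    fix w assume e: "srcF r = cpx1 w" and w: "w \<in> intermediates N L U V"
    show ?thesis
    proof
      assume "srcF r = cpx1 (S i q)" hence "w = S i q" using e by (simp add: cpx1_eq_iff)
      thus False using intermediate_not_nonintermediate[OF w] S_nonintermediate[OF i_in q] by metis
    qed
  next
    fix a b assume "srcF r = cpx2 a b" thus ?thesis using cpx1_ne_cpx2 by metis
  qed
  ultimately have m: "0 < m" and e: "srcF r = cpx2 (Y i) (S i q)" by metis+
  from r have "q < L i \<and> r = Ra i (Suc q)"
  proof (cases rule: labs_cases)
    case (A a b)
    hence "cpx2 (Y i) (S i q) = cpx2 (Y a) (S a (b - 1))" using e by simp
    moreover have "b - 1 \<in> {0..L a}" using A(2) by auto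
    ultimately have "i = a \<and> q = b - 1" using Y_S_complex_eq[OF i_in A(1) q] by blast
    thus ?thesis using A by auto
  next
    case (TA a b)
    hence "cpx2 (Y i) (S i q) = cpx2 (Yt a) (S a b)" using e by simp
    moreover have "b \<in> {0..L a}" using TA(2) by auto
    ultimately show ?thesis using Y_S_complex_neq_Yt_S[OF i_in TA(1) q] by blast
  qed (use e cpx1_ne_cpx2 in \<open>metis src.simps\<close>)+
  thus ?thesis using m by simp
qed

lemma dcoeff_Suc_U:
  assumes j: "j \<in> {1..L i}"
  shows "dcoeff k (Suc n) (ymon m (U i j)) =
    k (Rb i j) * (dcoeff k n (ymon m (S i (j - 1))) - dcoeff k n (ymon m (U i j))) +
    k (Rc i j) * (dcoeff k n (ymon m (S i j)) - dcoeff k n (ymon m (U i j)))"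
proof -
  have A: "{Rb i j, Rc i j} \<subseteq> R" using i_in j unfolding labs_def by blast
  have j1: "j - 1 \<in> {0..L i}" and j0: "j \<in> {0..L i}" using j by auto
  have n1: "U i j \<noteq> Y i" "S i (j - 1) \<noteq> Y i" "S i j \<noteq> Y i" "S i (j - 1) \<noteq> U i j" "S i j \<noteq> U i j"
    using U_neq_Y[OF j] S_neq_Y[OF j1] S_neq_Y[OF j0] U_neq_S[OF j j1] U_neq_S[OF j j0] by metis+
  have n2: "Y i \<noteq> U i j" "Y i \<noteq> S i (j - 1)" "Y i \<noteq> S i j" "U i j \<noteq> S i (j - 1)" "U i j \<noteq> S i j"
    using n1 by metis+
  have "dcoeff k (Suc n) (ymon m (U i j)) = (\<Sum>r\<in>{Rb i j, Rc i j}. k r * (\<Sum>s\<in>UNIV. (real (tgtF r s) - real (srcF r s)) *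
            ((real (ymon m (U i j) s) + 1 - real (srcF r s)) * dcoeff k n (pre_exp (ymon m (U i j)) (srcF r) s))))"
    unfolding dcoeff_Suc by (rule lie_coeff_sum_over[OF A]) (use src_le_ymon_U[OF j] in \<open>auto simp: cpx1_le_iff ymon_pos\<close>)
  also have "\<dots> = k (Rb i j) * (\<Sum>s\<in>UNIV. (real (cpx2 (Y i) (S i (j - 1)) s) - real (cpx1 (U i j) s)) *
            ((real (ymon m (U i j) s) + 1 - real (cpx1 (U i j) s)) * dcoeff k n (pre_exp (ymon m (U i j)) (cpx1 (U i j)) s))) +
       k (Rc i j) * (\<Sum>s\<in>UNIV. (real (cpx2 (Y i) (S i j) s) - real (cpx1 (U i j) s)) *
            ((real (ymon m (U i j) s) + 1 - real (cpx1 (U i j) s)) * dcoeff k n (pre_exp (ymon m (U i j)) (cpx1 (U i j)) s)))"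
    by simp
  also have "\<dots> = k (Rb i j) * (dcoeff k n (ymon m (S i (j - 1))) - dcoeff k n (ymon m (U i j))) +
    k (Rc i j) * (dcoeff k n (ymon m (S i j)) - dcoeff k n (ymon m (U i j)))"
    unfolding lie_sum_ymon_cpx1[OF n1(1)] by (simp add: ymon_apply cpx1_apply n1 n2 dcoeff_ymon_Y algebra_simps)
  finally show ?thesis .
qed

lemma dcoeff_Suc_V:
  assumes j: "j \<in> {1..L i}"
  shows "dcoeff k (Suc n) (ymon m (V i j)) =
    k (Rtb i j) * (dcoeff k n (ymon m (Yt i)) + dcoeff k n (ymon m (S i j)) - dcoeff k n (ymon m (V i j))) +
    k (Rtc i j) * (dcoeff k n (ymon m (Yt i)) + dcoeff k n (ymon m (S i (j - 1))) - dcoeff k n (ymon m (V i j)))"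
proof -
  have A: "{Rtb i j, Rtc i j} \<subseteq> R" using i_in j unfolding labs_def by blast
  have j1: "j - 1 \<in> {0..L i}" and j0: "j \<in> {0..L i}" using j by auto
  have n1: "V i j \<noteq> Y i" "S i (j - 1) \<noteq> Y i" "S i j \<noteq> Y i" "S i (j - 1) \<noteq> V i j" "S i j \<noteq> V i j"
     "Yt i \<noteq> Y i" "Yt i \<noteq> V i j"
    using V_neq_Y[OF j] S_neq_Y[OF j1] S_neq_Y[OF j0] V_neq_S[OF j j1] V_neq_S[OF j j0] Yt_neq_Y V_neq_Yt[OF j] by metis+
  have n2: "Y i \<noteq> V i j" "Y i \<noteq> S i (j - 1)" "Y i \<noteq> S i j" "V i j \<noteq> S i (j - 1)" "V i j \<noteq> S i j"
    "Y i \<noteq> Yt i" "V i j \<noteq> Yt i"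
    using n1 by metis+
  have "dcoeff k (Suc n) (ymon m (V i j)) = (\<Sum>r\<in>{Rtb i j, Rtc i j}. k r * (\<Sum>s\<in>UNIV. (real (tgtF r s) - real (srcF r s)) *
            ((real (ymon m (V i j) s) + 1 - real (srcF r s)) * dcoeff k n (pre_exp (ymon m (V i j)) (srcF r) s))))"
    unfolding dcoeff_Suc by (rule lie_coeff_sum_over[OF A]) (use src_le_ymon_V[OF j] in \<open>auto simp: cpx1_le_iff ymon_pos\<close>)
  also have "\<dots> = k (Rtb i j) * (\<Sum>s\<in>UNIV. (real (cpx2 (Yt i) (S i j) s) - real (cpx1 (V i j) s)) *
            ((real (ymon m (V i j) s) + 1 - real (cpx1 (V i j) s)) * dcoeff k n (pre_exp (ymon m (V i j)) (cpx1 (V i j)) s))) +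
       k (Rtc i j) * (\<Sum>s\<in>UNIV. (real (cpx2 (Yt i) (S i (j - 1)) s) - real (cpx1 (V i j) s)) *
            ((real (ymon m (V i j) s) + 1 - real (cpx1 (V i j) s)) * dcoeff k n (pre_exp (ymon m (V i j)) (cpx1 (V i j)) s)))"
    by simp
  also have "\<dots> = k (Rtb i j) * (dcoeff k n (ymon m (Yt i)) + dcoeff k n (ymon m (S i j)) - dcoeff k n (ymon m (V i j))) +
    k (Rtc i j) * (dcoeff k n (ymon m (Yt i)) + dcoeff k n (ymon m (S i (j - 1))) - dcoeff k n (ymon m (V i j)))"
    unfolding lie_sum_ymon_cpx1[OF n1(1)] by (simp add: ymon_apply cpx1_apply n1 n2 dcoeff_ymon_Y algebra_simps)
  finally show ?thesis .
qed

lemma dcoeff_Suc_S: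
  assumes q: "q \<in> {0..L i}"
  shows "dcoeff k (Suc n) (ymon m (S i q)) =
    (if 0 < m \<and> q < L i then k (Ra i (Suc q)) * (dcoeff k n (ymon (m - 1) (U i (Suc q))) - dcoeff k n (ymon (m - 1) (S i q))) else 0)"
proof (cases "0 < m \<and> q < L i")
  case True
  have j: "Suc q \<in> {1..L i}" using True by auto
  have A: "{Ra i (Suc q)} \<subseteq> R" using i_in j unfolding labs_def by blast
  have n1: "U i (Suc q) \<noteq> Y i" "S i q \<noteq> Y i" "S i q \<noteq> U i (Suc q)"
    using U_neq_Y[OF j] S_neq_Y[OF q] U_neq_S[OF j q] by metis+
  have n2: "Y i \<noteq> U i (Suc q)" "Y i \<noteq> S i q" "U i (Suc q) \<noteq> S i q" using n1 by metis+
  have le: "cpx2 (Y i) (S i q) \<le> ymon m (S i q)"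
    using True n2 by (simp add: cpx2_le_iff ymon_pos)
  have "dcoeff k (Suc n) (ymon m (S i q)) = (\<Sum>r\<in>{Ra i (Suc q)}. k r * (\<Sum>s\<in>UNIV. (real (tgtF r s) - real (srcF r s)) *
            ((real (ymon m (S i q) s) + 1 - real (srcF r s)) * dcoeff k n (pre_exp (ymon m (S i q)) (srcF r) s))))"
    unfolding dcoeff_Suc by (rule lie_coeff_sum_over[OF A]) (use src_le_ymon_S[OF q] le in auto)
  also have "\<dots> = k (Ra i (Suc q)) * (\<Sum>s\<in>UNIV. (real (cpx1 (U i (Suc q)) s) - real (cpx2 (Y i) (S i q) s)) *
            ((real (ymon m (S i q) s) + 1 - real (cpx2 (Y i) (S i q) s)) * dcoeff k n (pre_exp (ymon m (S i q)) (cpx2 (Y i) (S i q)) s)))"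
    by simp
  also have "\<dots> = k (Ra i (Suc q)) * (dcoeff k n (ymon (m - 1) (U i (Suc q))) - dcoeff k n (ymon (m - 1) (S i q)))"
    unfolding lie_sum_ymon_cpx2[OF n1(2)] by (simp add: ymon_apply cpx2_apply n1 n2 dcoeff_ymon_Y algebra_simps)
  finally show ?thesis using True by simp
next
  case False
  have "dcoeff k (Suc n) (ymon m (S i q)) = (\<Sum>r\<in>{}. k r * (\<Sum>s\<in>UNIV. (real (tgtF r s) - real (srcF r s)) *
            ((real (ymon m (S i q) s) + 1 - real (srcF r s)) * dcoeff k n (pre_exp (ymon m (S i q)) (srcF r) s))))"
    unfolding dcoeff_Suc by (rule lie_coeff_sum_over) (use src_le_ymon_S[OF q] False in auto)
  thus ?thesis unfolding if_not_P[OF False] by simp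
qed

lemma src_neq_S_S:
  assumes r: "r \<in> R" and a: "a \<in> {0..L i}" and b: "b \<in> {0..L i}" and e: "srcF r = cpx2 (S i a) (S i b)"
  shows False
  using r
proof (cases rule: labs_cases)
  case (A a' b')
  have m: "b' - 1 \<in> {0..L a'}" using A by auto
  have "cpx2 (Y a') (S a' (b' - 1)) = cpx2 (S i a) (S i b)" using e A by simp
  hence "(Y a' = S i a \<and> S a' (b' - 1) = S i b) \<or> (Y a' = S i b \<and> S a' (b' - 1) = S i a)" by (simp add: cpx2_eq_iff)
  thus False using linked_substrate_not_enzyme[OF i_in A(1) a b m] linked_substrate_not_enzyme[OF i_in A(1) b a m] by metis
next
  case (TA a' b')
  have m: "b' \<in> {0..L a'}" using TA by auto
  have "cpx2 (Yt a') (S a' b') = cpx2 (S i a) (S i b)" using e TA by simp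
  hence "(Yt a' = S i a \<and> S a' b' = S i b) \<or> (Yt a' = S i b \<and> S a' b' = S i a)" by (simp add: cpx2_eq_iff)
  thus False using linked_substrate_not_enzyme[OF i_in TA(1) a b m] linked_substrate_not_enzyme[OF i_in TA(1) b a m] by metis
qed (use e cpx1_ne_cpx2 in \<open>metis src.simps\<close>)+

lemma src_Y_S:
  assumes r: "r \<in> R" and q: "q \<in> {0..L i}" and e: "srcF r = cpx2 (Y i) (S i q)"
  shows "q < L i \<and> r = Ra i (Suc q)"
  using r
proof (cases rule: labs_cases)
  case (A a b)
  have m: "b - 1 \<in> {0..L a}" using A by auto
  have "cpx2 (Y i) (S i q) = cpx2 (Y a) (S a (b - 1))" using e A by simp
  hence "i = a \<and> q = b - 1" using Y_S_complex_eq[OF i_in A(1) q m] by blast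
  thus ?thesis using A by auto
next
  case (TA a b)
  have m: "b \<in> {0..L a}" using TA by auto
  have "cpx2 (Y i) (S i q) = cpx2 (Yt a) (S a b)" using e TA by simp
  thus ?thesis using Y_S_complex_neq_Yt_S[OF i_in TA(1) q m] by blast
qed (use e cpx1_ne_cpx2 in \<open>metis src.simps\<close>)+

lemma src_Yt_S:
  assumes r: "r \<in> R" and q: "q \<in> {0..L i}" and e: "srcF r = cpx2 (Yt i) (S i q)"
  shows "1 \<le> q \<and> r = Rta i q"
  using r
proof (cases rule: labs_cases)
  case (A a b)
  have m: "b - 1 \<in> {0..L a}" using A by auto
  have "cpx2 (Yt i) (S i q) = cpx2 (Y a) (S a (b - 1))" using e A by simp
  thus ?thesis using Y_S_complex_neq_Yt_S[OF A(1) i_in m q] by metis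
next
  case (TA a b)
  have m: "b \<in> {0..L a}" using TA by auto
  have "cpx2 (Yt i) (S i q) = cpx2 (Yt a) (S a b)" using e TA by simp
  hence "i = a \<and> q = b" using Yt_S_complex_eq[OF i_in TA(1) q m] by blast
  thus ?thesis using TA by auto
qed (use e cpx1_ne_cpx2 in \<open>metis src.simps\<close>)+

lemma src_U:
  assumes r: "r \<in> R" and j: "j \<in> {1..L i}" and e: "srcF r = cpx1 (U i j)"
  shows "r \<in> {Rb i j, Rc i j}"
  using src_le_ymon_U[OF j r, of 0] e by (simp add: cpx1_le_iff ymon_pos)

lemma src_V:
  assumes r: "r \<in> R" and j: "j \<in> {1..L i}" and e: "srcF r = cpx1 (V i j)"
  shows "r \<in> {Rtb i j, Rtc i j}"
  using src_le_ymon_V[OF j r, of 0] e by (simp add: cpx1_le_iff ymon_pos)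

lemma dcoeff_Suc_S_S: assumes a: "a \<in> {0..L i}" and b: "b \<in> {0..L i}"
  shows "dcoeff k (Suc n) (cpx2 (S i a) (S i b)) = 0"
proof -
  have "\<not> srcF r \<le> cpx2 (S i a) (S i b)" if r: "r \<in> R" for r
    using src_shape[OF r]
  proof (elim disjE exE conjE)
    fix w assume e: "srcF r = cpx1 w" and w: "w \<in> intermediates N L U V"
    show ?thesis
    proof
      assume "srcF r \<le> cpx2 (S i a) (S i b)"
      hence "w = S i a \<or> w = S i b" using e by (simp add: cpx1_le_iff cpx2_pos)
      thus False using intermediate_not_nonintermediate[OF w] S_nonintermediate[OF i_in a] S_nonintermediate[OF i_in b] by metis
    qed
  next
    fix p q assume e: "srcF r = cpx2 p q" and pq: "p \<noteq> q"
    show ?thesis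
    proof
      assume "srcF r \<le> cpx2 (S i a) (S i b)"
      hence "(p = S i a \<or> p = S i b) \<and> (q = S i a \<or> q = S i b)" using e pq by (simp add: cpx2_le_iff cpx2_pos)
      hence "srcF r = cpx2 (S i a) (S i b) \<or> srcF r = cpx2 (S i b) (S i a)" using e pq by (auto simp: cpx2_eq_iff)
      thus False using src_neq_S_S[OF r a b] src_neq_S_S[OF r b a] by metis
    qed
  qed
  hence "lie_coeff R srcF tgtF k (dcoeff k n) (cpx2 (S i a) (S i b)) = (\<Sum>r\<in>{}. k r * (\<Sum>s\<in>UNIV. (real (tgtF r s) - real (srcF r s)) *
            ((real (cpx2 (S i a) (S i b) s) + 1 - real (srcF r s)) * dcoeff k n (pre_exp (cpx2 (S i a) (S i b)) (srcF r) s))))"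
    by (intro lie_coeff_sum_over) auto
  thus ?thesis by (simp add: dcoeff_Suc)
qed

lemma dcoeff_1:
  "dcoeff k 1 g = (\<Sum>r\<in>R. if srcF r = g then k r * (real (tgtF r (S i (L i))) - real (srcF r (S i (L i)))) else 0)"
proof -
  have "dcoeff k 1 g = lie_coeff R srcF tgtF k out_coeff g" by (simp add: dcoeff_Suc[of k 0, simplified] dcoeff_0)
  also have "\<dots> = (\<Sum>r\<in>R. if srcF r = g then k r * (real (tgtF r (S i (L i))) - real (srcF r (S i (L i)))) else 0)"
    unfolding lie_coeff_def
  proof (rule sum.cong[OF refl])
    fix r
    have key: "srcF r \<le> g \<Longrightarrow> pre_exp g (srcF r) s = cpx1 (S i (L i)) \<longleftrightarrow> s = S i (L i) \<and> g = srcF r" for s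
    proof
      assume le: "srcF r \<le> g" and e: "pre_exp g (srcF r) s = cpx1 (S i (L i))"
      have "pre_exp g (srcF r) s s = cpx1 (S i (L i)) s" using e by simp
      hence ss: "s = S i (L i)" by (simp add: pre_exp_def cpx1_def split: if_splits)
      have "g t = srcF r t" for t
      proof -
        have "pre_exp g (srcF r) s t = cpx1 (S i (L i)) t" using e by simp
        hence "g t - srcF r t = 0" using ss by (simp add: pre_exp_def cpx1_def split: if_splits)
        thus ?thesis using le by (simp add: le_fun_def) (meson diff_is_0_eq le_antisym le_fun_def)
      qed
      thus "s = S i (L i) \<and> g = srcF r" using ss by auto
    next
      assume "s = S i (L i) \<and> g = srcF r"
      thus "pre_exp g (srcF r) s = cpx1 (S i (L i))" by (simp add: pre_exp_self)
    qed
    show "(if srcF r \<le> g then k r * (\<Sum>s\<in>UNIV. (real (tgtF r s) - real (srcF r s)) *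
        ((real (g s) + 1 - real (srcF r s)) * out_coeff (pre_exp g (srcF r) s))) else 0) =
      (if srcF r = g then k r * (real (tgtF r (S i (L i))) - real (srcF r (S i (L i)))) else 0)"
    proof (cases "srcF r \<le> g")
      case True
      have "(\<Sum>s\<in>UNIV. (real (tgtF r s) - real (srcF r s)) *
        ((real (g s) + 1 - real (srcF r s)) * out_coeff (pre_exp g (srcF r) s))) =
        (\<Sum>s\<in>UNIV. if s = S i (L i) then (if g = srcF r then real (tgtF r s) - real (srcF r s) else 0) else 0)"
        by (rule sum.cong[OF refl]) (auto simp: out_coeff_def key[OF True])
      also have "\<dots> = (if g = srcF r then real (tgtF r (S i (L i))) - real (srcF r (S i (L i))) else 0)"
        by simp
      finally show ?thesis using True by auto
    next
      case False
      hence "srcF r \<noteq> g" by (auto simp: le_fun_def)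
      thus ?thesis using False by simp
    qed
  qed
  finally show ?thesis .
qed

lemma dcoeff_2: "dcoeff k 2 = lie_coeff R srcF tgtF k (dcoeff k 1)"
  using dcoeff_Suc[of k 1] by (simp add: numeral_2_eq_2)

lemma dcoeff_3: "dcoeff k 3 = lie_coeff R srcF tgtF k (dcoeff k 2)"
  using dcoeff_Suc[of k 2] by (simp add: numeral_2_eq_2 numeral_3_eq_3)

lemma dcoeff_1_intermediate: assumes w: "w \<in> intermediates N L U V" shows "dcoeff k 1 (cpx2 p w) = 0"
proof -
  have "srcF r \<noteq> cpx2 p w" if r: "r \<in> R" for r
    using src_shape[OF r]
  proof (elim disjE exE conjE)
    fix w' assume "srcF r = cpx1 w'" thus ?thesis using cpx1_ne_cpx2 by metis
  next
    fix a b assume e: "srcF r = cpx2 a b" and a: "a \<in> nonintermediates N L Y Yt S" and b: "b \<in> nonintermediates N L Y Yt S"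
    show ?thesis
    proof
      assume "srcF r = cpx2 p w"
      hence "w = a \<or> w = b" using e by (auto simp: cpx2_eq_iff)
      thus False using intermediate_not_nonintermediate[OF w] a b by metis
    qed
  qed
  thus ?thesis unfolding dcoeff_1 by (intro sum.neutral) auto
qed

lemma dcoeff_1_Yt_S: assumes q: "q \<in> {1..L i}"
  shows "dcoeff k 1 (cpx2 (Yt i) (S i q)) = (if q = L i then - k (Rta i q) else 0)"
proof -
  have q0: "q \<in> {0..L i}" using q by auto
  have rq: "Rta i q \<in> R" using i_in q unfolding labs_def by blast
  define f where "f r = k r * (real (tgtF r (S i (L i))) - real (srcF r (S i (L i))))" for r
  have cg: "(if srcF r = cpx2 (Yt i) (S i q) then f r else 0) = (if r = Rta i q then f r else 0)" if r: "r \<in> R" for r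
  proof (cases "srcF r = cpx2 (Yt i) (S i q)")
    case True
    hence "r = Rta i q" using src_Yt_S[OF r q0] by blast
    thus ?thesis using True by simp
  next
    case False
    hence "r \<noteq> Rta i q" by auto
    thus ?thesis using False by simp
  qed
  have "dcoeff k 1 (cpx2 (Yt i) (S i q)) = (\<Sum>r\<in>R. if r = Rta i q then f r else 0)"
    unfolding dcoeff_1 f_def[symmetric] by (rule sum.cong[OF refl cg])
  also have "\<dots> = f (Rta i q)" using rq by (simp add: sum.delta[OF finite_labs])
  also have "\<dots> = (if q = L i then - k (Rta i q) else 0)"
  proof (cases "q = L i")
    case True
    have b: "S i (L i) \<noteq> Yt i" using S_neq_Yt[of "L i"] by auto
    have a: "S i (L i) \<noteq> V i q" using V_neq_S[OF q, of "L i"] by auto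
    have "cpx1 (V i q) (S i (L i)) = 0" using a by (simp add: cpx1_apply)
    moreover have "cpx2 (Yt i) (S i q) (S i (L i)) = 1" using b True by (simp add: cpx2_apply)
    ultimately show ?thesis using True by (simp add: f_def)
  next
    case False
    have b: "S i (L i) \<noteq> Yt i" using S_neq_Yt[of "L i"] by auto
    have a: "S i (L i) \<noteq> V i q" using V_neq_S[OF q, of "L i"] by auto
    have c: "S i (L i) \<noteq> S i q" using S_eq_iff[OF i_in q0, of "L i"] False by auto
    have "cpx1 (V i q) (S i (L i)) = 0" using a by (simp add: cpx1_apply)
    moreover have "cpx2 (Yt i) (S i q) (S i (L i)) = 0" using b c by (simp add: cpx2_apply)
    ultimately show ?thesis using False by (simp add: f_def)
  qed
  finally show ?thesis .
qed

lemma src_le_S_V: assumes q: "q \<in> {0..L i}" and j: "j \<in> {1..L i}" and r: "r \<in> R"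
    and le: "srcF r \<le> cpx2 (S i q) (V i j)"
  shows "r \<in> {Rtb i j, Rtc i j}"
  using src_shape[OF r]
proof (elim disjE exE conjE)
  fix w assume e: "srcF r = cpx1 w" and w: "w \<in> intermediates N L U V"
  have "w = S i q \<or> w = V i j" using le e by (simp add: cpx1_le_iff cpx2_pos)
  hence "w = V i j" using intermediate_not_nonintermediate[OF w] S_nonintermediate[OF i_in q] by metis
  thus ?thesis using src_V[OF r j] e by simp
next
  fix a b assume e: "srcF r = cpx2 a b" and ab: "a \<noteq> b" and a: "a \<in> nonintermediates N L Y Yt S" and b: "b \<in> nonintermediates N L Y Yt S"
  have "(a = S i q \<or> a = V i j) \<and> (b = S i q \<or> b = V i j)" using le e ab by (simp add: cpx2_le_iff cpx2_pos)
  hence "a = S i q \<and> b = S i q" using V_neq_nonintermediate[OF i_in j a] V_neq_nonintermediate[OF i_in j b] by metis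
  thus ?thesis using ab by simp
qed

lemma src_le_S_U: assumes q: "q \<in> {0..L i}" and j: "j \<in> {1..L i}" and r: "r \<in> R"
    and le: "srcF r \<le> cpx2 (S i q) (U i j)"
  shows "r \<in> {Rb i j, Rc i j}"
  using src_shape[OF r]
proof (elim disjE exE conjE)
  fix w assume e: "srcF r = cpx1 w" and w: "w \<in> intermediates N L U V"
  have "w = S i q \<or> w = U i j" using le e by (simp add: cpx1_le_iff cpx2_pos)
  hence "w = U i j" using intermediate_not_nonintermediate[OF w] S_nonintermediate[OF i_in q] by metis
  thus ?thesis using src_U[OF r j] e by simp
next
  fix a b assume e: "srcF r = cpx2 a b" and ab: "a \<noteq> b" and a: "a \<in> nonintermediates N L Y Yt S" and b: "b \<in> nonintermediates N L Y Yt S"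
  have "(a = S i q \<or> a = U i j) \<and> (b = S i q \<or> b = U i j)" using le e ab by (simp add: cpx2_le_iff cpx2_pos)
  hence "a = S i q \<and> b = S i q" using U_neq_nonintermediate[OF i_in j a] U_neq_nonintermediate[OF i_in j b] by metis
  thus ?thesis using ab by simp
qed

lemma src_le_cpx3:
  assumes r: "r \<in> R" and E: "E = Y i \<or> E = Yt i" and a: "a \<in> {0..L i}" and b: "b \<in> {0..L i}"
    and le: "srcF r \<le> cpx3 E (S i a) (S i b)"
  shows "srcF r = cpx2 E (S i a) \<or> srcF r = cpx2 E (S i b)"
  using src_shape[OF r]
proof (elim disjE exE conjE)
  fix w assume e: "srcF r = cpx1 w" and w: "w \<in> intermediates N L U V"
  have "w = E \<or> w = S i a \<or> w = S i b" using le e by (simp add: cpx1_le_iff cpx3_pos)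
  thus ?thesis using intermediate_not_nonintermediate[OF w] S_nonintermediate[OF i_in a] S_nonintermediate[OF i_in b] Y_nonintermediate[OF i_in] Yt_nonintermediate[OF i_in] E by metis
next
  fix p q assume e: "srcF r = cpx2 p q" and pq: "p \<noteq> q"
  have p: "p = E \<or> p = S i a \<or> p = S i b" and q: "q = E \<or> q = S i a \<or> q = S i b"
    using le e pq by (simp_all add: cpx2_le_iff cpx3_pos)
  show ?thesis
  proof (cases "p = E \<or> q = E")
    case True
    thus ?thesis using p q pq e cpx2_comm by metis
  next
    case False
    hence "srcF r = cpx2 (S i a) (S i b) \<or> srcF r = cpx2 (S i b) (S i a) \<or> p = q" using p q e by metis
    thus ?thesis using src_neq_S_S[OF r a b] src_neq_S_S[OF r b a] pq by metis
  qed
qed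

definition rate_prod :: "(rlab \<Rightarrow> real) \<Rightarrow> nat \<Rightarrow> real" where
  "rate_prod k j = (\<Prod>q\<in>{Suc j..L i}. k (Rc i q) * k (Ra i q))"

lemma rate_prod_step: "1 \<le> j \<Longrightarrow> j \<le> L i \<Longrightarrow> rate_prod k (j - 1) = k (Rc i j) * k (Ra i j) * rate_prod k j"
proof -
  assume j: "1 \<le> j" "j \<le> L i"
  have "{Suc (j - 1)..L i} = insert j {Suc j..L i}" using j by auto
  thus ?thesis unfolding rate_prod_def by simp
qed

lemma rate_prod_L: "rate_prod k (L i) = 1" by (simp add: rate_prod_def)

lemma rate_prod_pos:
  assumes "\<forall>r\<in>R. 0 < k r"
  shows "0 < rate_prod k j"
  unfolding rate_prod_def
proof (rule prod_pos)
  fix q assume "q \<in> {Suc j..L i}"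
  hence "q \<in> {1..L i}" by auto
  thus "0 < k (Rc i q) * k (Ra i q)" using assms reactions_in_R by simp
qed

lemma dcoeff_0_ymon: "dcoeff k 0 (ymon m (S i (L i))) = (if m = 0 then 1 else 0)"
proof -
  have "ymon m (S i (L i)) = cpx1 (S i (L i)) \<longleftrightarrow> m = 0"
  proof
    assume "ymon m (S i (L i)) = cpx1 (S i (L i))"
    hence "ymon m (S i (L i)) (Y i) = cpx1 (S i (L i)) (Y i)" by simp
    thus "m = 0" using S_neq_Y[of "L i"] by (simp add: ymon_apply cpx1_apply)
  next
    assume "m = 0" thus "ymon m (S i (L i)) = cpx1 (S i (L i))" by (simp add: ymon_def cpx1_def fun_eq_iff)
  qed
  thus ?thesis by (simp add: dcoeff_0 out_coeff_def)
qed

lemma dcoeff_U_front: assumes j: "j \<in> {1..L i}"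
  shows "dcoeff k (Suc (2 * (L i - j))) (ymon m (U i j)) = k (Rc i j) * dcoeff k (2 * (L i - j)) (ymon m (S i j))"
proof -
  have j1: "j - 1 \<in> {0..L i}" using j by auto
  have z1: "dcoeff k (2 * (L i - j)) (ymon m (S i (j - 1))) = 0"
    by (rule dcoeff_unreachable[OF S_neq_Y[OF j1] S_not_reachable[OF j1]]) (use j in auto)
  have z2: "dcoeff k (2 * (L i - j)) (ymon m (U i j)) = 0"
    by (rule dcoeff_unreachable[OF U_neq_Y[OF j] U_not_reachable[OF j]]) auto
  show ?thesis using dcoeff_Suc_U[OF j, of k "2 * (L i - j)" m] z1 z2 by simp
qed

lemma dcoeff_V_front: assumes j: "j \<in> {1..L i}"
  shows "dcoeff k (Suc (2 * (L i - j))) (ymon m (V i j)) = k (Rtb i j) * dcoeff k (2 * (L i - j)) (ymon m (S i j))"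
proof -
  have j1: "j - 1 \<in> {0..L i}" using j by auto
  have z1: "dcoeff k (2 * (L i - j)) (ymon m (S i (j - 1))) = 0"
    by (rule dcoeff_unreachable[OF S_neq_Y[OF j1] S_not_reachable[OF j1]]) (use j in auto)
  have z2: "dcoeff k (2 * (L i - j)) (ymon m (V i j)) = 0"
    by (rule dcoeff_unreachable[OF V_neq_Y[OF j] V_not_reachable[OF j]]) auto
  have z3: "dcoeff k (2 * (L i - j)) (ymon m (Yt i)) = 0"
    by (rule dcoeff_unreachable[OF Yt_neq_Y Yt_not_reachable])
  show ?thesis using dcoeff_Suc_V[OF j, of k "2 * (L i - j)" m] z1 z2 z3 by simp
qed

lemma dcoeff_S_front: assumes j: "j \<in> {1..L i}"
  shows "dcoeff k (Suc (Suc (2 * (L i - j)))) (ymon m (S i (j - 1))) =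
     (if 0 < m then k (Ra i j) * dcoeff k (Suc (2 * (L i - j))) (ymon (m - 1) (U i j)) else 0)"
proof -
  have j1: "j - 1 \<in> {0..L i}" using j by auto
  have sj: "Suc (j - 1) = j" using j by auto
  have lt: "j - 1 < L i" using j by auto
  have z1: "dcoeff k (Suc (2 * (L i - j))) (ymon (m - 1) (S i (j - 1))) = 0"
    by (rule dcoeff_unreachable[OF S_neq_Y[OF j1] S_not_reachable[OF j1]]) (use j in auto)
  show ?thesis using dcoeff_Suc_S[OF j1, of k "Suc (2 * (L i - j))" m] z1 sj lt by simp
qed

lemma dcoeff_S_chain: "d < L i \<Longrightarrow> dcoeff k (2 * d) (ymon m (S i (L i - d))) = (if m = d then rate_prod k (L i - d) else 0)"
proof (induction d arbitrary: m)
  case 0 thus ?case by (simp add: dcoeff_0_ymon rate_prod_L)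
next
  case (Suc d)
  define j where "j = L i - d"
  have j: "j \<in> {1..L i}" and j2: "2 \<le> j" using Suc.prems unfolding j_def by auto
  have ld: "L i - j = d" and ls: "L i - Suc d = j - 1" using Suc.prems unfolding j_def by auto
  have IH: "dcoeff k (2 * d) (ymon m' (S i j)) = (if m' = d then rate_prod k j else 0)" for m'
    using Suc.IH[of m'] Suc.prems unfolding j_def by simp
  have e2: "2 * Suc d = Suc (Suc (2 * (L i - j)))" using ld by simp
  have "dcoeff k (2 * Suc d) (ymon m (S i (L i - Suc d))) = dcoeff k (Suc (Suc (2 * (L i - j)))) (ymon m (S i (j - 1)))"
    using e2 ls by simp
  also have "\<dots> = (if 0 < m then k (Ra i j) * (k (Rc i j) * dcoeff k (2 * d) (ymon (m - 1) (S i j))) else 0)"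
    using dcoeff_S_front[OF j] dcoeff_U_front[OF j] ld by simp
  also have "\<dots> = (if m = Suc d then rate_prod k (j - 1) else 0)"
    using IH rate_prod_step[of j k] j by (auto simp: algebra_simps)
  finally show ?case using ls by simp
qed

lemma dcoeff_U_first: assumes j: "j \<in> {1..L i}"
  shows "dcoeff k (Suc (2 * (L i - j))) (ymon (L i - j) (U i j)) = k (Rc i j) * rate_prod k j"
  using dcoeff_U_front[OF j] dcoeff_S_chain[of "L i - j" k "L i - j"] j by auto

lemma dcoeff_V_first: assumes j: "j \<in> {1..L i}"
  shows "dcoeff k (Suc (2 * (L i - j))) (ymon (L i - j) (V i j)) = k (Rtb i j) * rate_prod k j"
  using dcoeff_V_front[OF j] dcoeff_S_chain[of "L i - j" k "L i - j"] j by auto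

lemma dcoeff2_S: "dcoeff k 2 (ymon 1 (S i (L i - 1))) = k (Ra i (L i)) * k (Rc i (L i))"
proof -
  have j: "L i \<in> {1..L i}" using L_i_pos by auto
  have "dcoeff k 2 (ymon 1 (S i (L i - 1))) = k (Ra i (L i)) * dcoeff k 1 (ymon 0 (U i (L i)))"
    using dcoeff_S_front[OF j, of k 1] by (simp add: numeral_2_eq_2)
  also have "dcoeff k 1 (ymon 0 (U i (L i))) = k (Rc i (L i))"
    using dcoeff_U_front[OF j, of k 0] by (simp add: dcoeff_0_ymon)
  finally show ?thesis .
qed

lemma dcoeff2_U: "dcoeff k 2 (ymon 0 (U i (L i))) = - ((k (Rb i (L i)) + k (Rc i (L i))) * k (Rc i (L i)))"
proof -
  have j: "L i \<in> {1..L i}" using L_i_pos by auto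
  have q1: "L i - 1 \<in> {0..L i}" and q2: "L i \<in> {0..L i}" by auto
  have u: "dcoeff k 1 (ymon 0 (U i (L i))) = k (Rc i (L i))"
    using dcoeff_U_front[OF j, of k 0] by (simp add: dcoeff_0_ymon)
  have s1: "dcoeff k 1 (ymon 0 (S i (L i - 1))) = 0" using dcoeff_Suc_S[OF q1, of k 0 0] by simp
  have s2: "dcoeff k 1 (ymon 0 (S i (L i))) = 0" using dcoeff_Suc_S[OF q2, of k 0 0] by simp
  show ?thesis using dcoeff_Suc_U[OF j, of k 1 0] u s1 s2 by (simp add: numeral_2_eq_2 algebra_simps)
qed

lemma dcoeff2_S_U: assumes q: "q \<in> {0..L i}" and ql: "q < L i" and j: "j \<in> {1..L i}"
  shows "dcoeff k 2 (cpx2 (S i q) (U i j)) = 0"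
proof -
  have A: "{Rb i j, Rc i j} \<subseteq> R" using i_in j unfolding labs_def by blast
  have j1: "j - 1 \<in> {0..L i}" and j0: "j \<in> {0..L i}" using j by auto
  have complete: "r \<in> {Rb i j, Rc i j}" if r: "r \<in> R" and le: "srcF r \<le> cpx2 (S i q) (U i j)" for r
    using src_shape[OF r]
  proof (elim disjE exE conjE)
    fix w assume e: "srcF r = cpx1 w" and w: "w \<in> intermediates N L U V"
    have "w = S i q \<or> w = U i j" using le e by (simp add: cpx1_le_iff cpx2_pos)
    hence "w = U i j" using intermediate_not_nonintermediate[OF w] S_nonintermediate[OF i_in q] by metis
    thus ?thesis using src_U[OF r j] e by simp
  next
    fix a b assume e: "srcF r = cpx2 a b" and ab: "a \<noteq> b" and a: "a \<in> nonintermediates N L Y Yt S" and b: "b \<in> nonintermediates N L Y Yt S"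
    have "(a = S i q \<or> a = U i j) \<and> (b = S i q \<or> b = U i j)" using le e ab by (simp add: cpx2_le_iff cpx2_pos)
    hence "a = S i q \<and> b = S i q" using U_neq_nonintermediate[OF i_in j a] U_neq_nonintermediate[OF i_in j b] by metis
    thus ?thesis using ab by simp
  qed
  have enabled: "srcF r \<le> cpx2 (S i q) (U i j)" if "r \<in> {Rb i j, Rc i j}" for r
    using that by (auto simp: cpx1_le_iff cpx2_pos)
  have z1: "dcoeff k 1 (cpx2 (S i q) (Y i)) = 0"
    using dcoeff_unreachable[OF S_neq_Y[OF q] S_not_reachable[OF q], of 1 k 1] ql by (simp add: cpx2_comm[of "S i q"] cpx2_Y_ymon)
  have z2: "dcoeff k 1 (cpx2 (S i q) (S i (j - 1))) = 0" "dcoeff k 1 (cpx2 (S i q) (S i j)) = 0"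
    using dcoeff_Suc_S_S[OF q j1, of k 0] dcoeff_Suc_S_S[OF q j0, of k 0] by simp_all
  have z3: "dcoeff k 1 (cpx2 (S i q) (U i j)) = 0" by (rule dcoeff_1_intermediate[OF U_intermediate[OF i_in j]])
  have "dcoeff k 2 (cpx2 (S i q) (U i j)) = (\<Sum>r\<in>{Rb i j, Rc i j}. k r * (\<Sum>s\<in>UNIV. (real (tgtF r s) - real (srcF r s)) *
            ((real (cpx2 (S i q) (U i j) s) + 1 - real (srcF r s)) * dcoeff k 1 (pre_exp (cpx2 (S i q) (U i j)) (srcF r) s))))"
    unfolding dcoeff_2 by (rule lie_coeff_sum_over[OF A complete enabled])
  also have "\<dots> = k (Rb i j) * (\<Sum>s\<in>UNIV. (real (cpx2 (Y i) (S i (j - 1)) s) - real (cpx1 (U i j) s)) *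
            ((real (cpx2 (S i q) (U i j) s) + 1 - real (cpx1 (U i j) s)) * dcoeff k 1 (pre_exp (cpx2 (S i q) (U i j)) (cpx1 (U i j)) s))) +
       k (Rc i j) * (\<Sum>s\<in>UNIV. (real (cpx2 (Y i) (S i j) s) - real (cpx1 (U i j) s)) *
            ((real (cpx2 (S i q) (U i j) s) + 1 - real (cpx1 (U i j) s)) * dcoeff k 1 (pre_exp (cpx2 (S i q) (U i j)) (cpx1 (U i j)) s)))"
    by simp
  also have "\<dots> = 0" unfolding lie_sum_cpx1[where c="dcoeff k 1"] using z1 z2 z3 by simp
  finally show ?thesis .
qed

lemma dcoeff2_Yt_S_S: assumes j: "j \<in> {1..L i}" and jl: "j < L i"
  shows "dcoeff k 2 (cpx3 (Yt i) (S i (L i)) (S i j)) = k (Rta i j) * k (Rta i (L i))"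
proof -
  let ?g = "cpx3 (Yt i) (S i (L i)) (S i j)"
  have jL: "L i \<in> {1..L i}" using L_i_pos by auto
  have j0: "j \<in> {0..L i}" and L0: "L i \<in> {0..L i}" using j by auto
  have A: "{Rta i (L i), Rta i j} \<subseteq> R" using i_in j jL unfolding labs_def by blast
  have complete: "r \<in> {Rta i (L i), Rta i j}" if r: "r \<in> R" and le: "srcF r \<le> ?g" for r
    using src_le_cpx3[OF r _ L0 j0 le] src_Yt_S[OF r L0] src_Yt_S[OF r j0] by auto
  have n1: "Yt i \<noteq> S i (L i)" "Yt i \<noteq> S i j" using S_neq_Yt[OF L0] S_neq_Yt[OF j0] by metis+
  have enabled: "srcF r \<le> ?g" if "r \<in> {Rta i (L i), Rta i j}" for r
    using that n1 by (auto simp: cpx2_le_iff cpx3_pos)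
  have ne: "Rta i (L i) \<noteq> Rta i j" using jl by simp
  have z1: "dcoeff k 1 (cpx2 (S i j) (V i (L i))) = 0" "dcoeff k 1 (cpx2 (S i (L i)) (V i j)) = 0"
    using dcoeff_1_intermediate[OF V_intermediate[OF i_in jL]] dcoeff_1_intermediate[OF V_intermediate[OF i_in j]] by auto
  have z2: "dcoeff k 1 (cpx2 (S i j) (Yt i)) = 0" "dcoeff k 1 (cpx2 (S i (L i)) (Yt i)) = - k (Rta i (L i))"
    using dcoeff_1_Yt_S[OF j, of k] dcoeff_1_Yt_S[OF jL, of k] jl by (simp_all add: cpx2_comm)
  have z3: "dcoeff k 1 (cpx2 (S i j) (S i (L i))) = 0" "dcoeff k 1 (cpx2 (S i (L i)) (S i j)) = 0"
    using dcoeff_Suc_S_S[OF j0 L0, of k 0] dcoeff_Suc_S_S[OF L0 j0, of k 0] by simp_all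
  have F: "real (?g (Yt i)) + 1 - real (cpx2 (Yt i) (S i j) (Yt i)) = 1"
    using n1 by (simp add: cpx3_apply cpx2_apply)
  have "dcoeff k 2 ?g = (\<Sum>r\<in>{Rta i (L i), Rta i j}. k r * (\<Sum>s\<in>UNIV. (real (tgtF r s) - real (srcF r s)) *
            ((real (?g s) + 1 - real (srcF r s)) * dcoeff k 1 (pre_exp ?g (srcF r) s))))"
    unfolding dcoeff_2 by (rule lie_coeff_sum_over[OF A complete enabled])
  also have "\<dots> = k (Rta i (L i)) * (\<Sum>s\<in>UNIV. (real (cpx1 (V i (L i)) s) - real (cpx2 (Yt i) (S i (L i)) s)) *
            ((real (?g s) + 1 - real (cpx2 (Yt i) (S i (L i)) s)) * dcoeff k 1 (pre_exp ?g (cpx2 (Yt i) (S i (L i))) s))) +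
       k (Rta i j) * (\<Sum>s\<in>UNIV. (real (cpx1 (V i j) s) - real (cpx2 (Yt i) (S i j) s)) *
            ((real (?g s) + 1 - real (cpx2 (Yt i) (S i j) s)) * dcoeff k 1 (pre_exp ?g (cpx2 (Yt i) (S i j)) s)))"
    using ne by simp
  also have "\<dots> = k (Rta i j) * k (Rta i (L i))"
    unfolding lie_sum_cpx3_1[where c="dcoeff k 1"] lie_sum_cpx3_2[where c="dcoeff k 1"] using z1 z2 z3 F by simp
  finally show ?thesis .
qed

lemma dcoeff2_S_V: assumes j: "j \<in> {1..L i}"
  shows "dcoeff k 2 (cpx2 (S i (L i)) (V i j)) = - ((k (Rtb i j) + k (Rtc i j)) * k (Rta i (L i)))"
proof -
  let ?g = "cpx2 (S i (L i)) (V i j)"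
  have jL: "L i \<in> {1..L i}" using L_i_pos by auto
  have j0: "j \<in> {0..L i}" and j1: "j - 1 \<in> {0..L i}" and L0: "L i \<in> {0..L i}" using j by auto
  have A: "{Rtb i j, Rtc i j} \<subseteq> R" using i_in j unfolding labs_def by blast
  have complete: "r \<in> {Rtb i j, Rtc i j}" if r: "r \<in> R" and le: "srcF r \<le> ?g" for r
    by (rule src_le_S_V[OF L0 j r le])
  have enabled: "srcF r \<le> ?g" if "r \<in> {Rtb i j, Rtc i j}" for r
    using that by (auto simp: cpx1_le_iff cpx2_pos)
  have n1: "Yt i \<noteq> S i (L i)" "Yt i \<noteq> V i j" using S_neq_Yt[OF L0] V_neq_Yt[OF j] by metis+
  have z1: "dcoeff k 1 (cpx2 (S i (L i)) (V i j)) = 0" using dcoeff_1_intermediate[OF V_intermediate[OF i_in j]] by auto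
  have z2: "dcoeff k 1 (cpx2 (S i (L i)) (Yt i)) = - k (Rta i (L i))"
    using dcoeff_1_Yt_S[OF jL, of k] by (simp add: cpx2_comm)
  have z3: "dcoeff k 1 (cpx2 (S i (L i)) (S i j)) = 0" "dcoeff k 1 (cpx2 (S i (L i)) (S i (j - 1))) = 0"
    using dcoeff_Suc_S_S[OF L0 j0, of k 0] dcoeff_Suc_S_S[OF L0 j1, of k 0] by simp_all
  have F: "real (?g (Yt i)) + 1 - real (cpx1 (V i j) (Yt i)) = 1"
    using n1 by (simp add: cpx1_apply cpx2_apply)
  have "dcoeff k 2 ?g = (\<Sum>r\<in>{Rtb i j, Rtc i j}. k r * (\<Sum>s\<in>UNIV. (real (tgtF r s) - real (srcF r s)) *
            ((real (?g s) + 1 - real (srcF r s)) * dcoeff k 1 (pre_exp ?g (srcF r) s))))"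
    unfolding dcoeff_2 by (rule lie_coeff_sum_over[OF A complete enabled])
  also have "\<dots> = k (Rtb i j) * (\<Sum>s\<in>UNIV. (real (cpx2 (Yt i) (S i j) s) - real (cpx1 (V i j) s)) *
            ((real (?g s) + 1 - real (cpx1 (V i j) s)) * dcoeff k 1 (pre_exp ?g (cpx1 (V i j)) s))) +
       k (Rtc i j) * (\<Sum>s\<in>UNIV. (real (cpx2 (Yt i) (S i (j - 1)) s) - real (cpx1 (V i j) s)) *
            ((real (?g s) + 1 - real (cpx1 (V i j) s)) * dcoeff k 1 (pre_exp ?g (cpx1 (V i j)) s)))"
    by simp
  also have "\<dots> = - ((k (Rtb i j) + k (Rtc i j)) * k (Rta i (L i)))"
    unfolding lie_sum_cpx1[where c="dcoeff k 1"] using z1 z2 z3 F by (simp add: algebra_simps)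
  finally show ?thesis .
qed

lemma dcoeff3_Y_S_S: assumes j: "j \<in> {1..L i}" and jl: "j < L i"
  shows "dcoeff k 3 (cpx3 (Y i) (S i (L i - 1)) (S i (j - 1))) = - (k (Ra i j) * (k (Ra i (L i)) * k (Rc i (L i))))"
proof -
  let ?g = "cpx3 (Y i) (S i (L i - 1)) (S i (j - 1))"
  have jL: "L i \<in> {1..L i}" using L_i_pos by auto
  have j1: "j - 1 \<in> {0..L i}" and L1: "L i - 1 \<in> {0..L i}" using j by auto
  have A: "{Ra i (L i), Ra i j} \<subseteq> R" using i_in j jL unfolding labs_def by blast
  have sL: "Suc (L i - 1) = L i" and sj: "Suc (j - 1) = j" using j L_i_pos by auto
  have complete: "r \<in> {Ra i (L i), Ra i j}" if r: "r \<in> R" and le: "srcF r \<le> ?g" for r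
    using src_le_cpx3[OF r _ L1 j1 le] src_Y_S[OF r L1] src_Y_S[OF r j1] sL sj by auto
  have n1: "Y i \<noteq> S i (L i - 1)" "Y i \<noteq> S i (j - 1)" using S_neq_Y[OF L1] S_neq_Y[OF j1] by metis+
  have enabled: "srcF r \<le> ?g" if "r \<in> {Ra i (L i), Ra i j}" for r
    using that n1 by (auto simp: cpx2_le_iff cpx3_pos)
  have ne: "Ra i (L i) \<noteq> Ra i j" using jl by simp
  have z1: "dcoeff k 2 (cpx2 (S i (j - 1)) (U i (L i))) = 0" "dcoeff k 2 (cpx2 (S i (L i - 1)) (U i j)) = 0"
    using dcoeff2_S_U[OF j1 _ jL, of k] dcoeff2_S_U[OF L1 _ j, of k] jl L_i_pos by auto
  have z2: "dcoeff k 2 (cpx2 (S i (j - 1)) (Y i)) = 0"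
  proof -
    have "dcoeff k 2 (ymon 1 (S i (j - 1))) = 0"
      by (rule dcoeff_unreachable[OF S_neq_Y[OF j1] S_not_reachable[OF j1]]) (use jl j in auto)
    thus ?thesis unfolding cpx2_ymon_Y .
  qed
  have z2b: "dcoeff k 2 (cpx2 (S i (L i - 1)) (Y i)) = k (Ra i (L i)) * k (Rc i (L i))"
    using dcoeff2_S[of k] unfolding cpx2_ymon_Y .
  have z3: "dcoeff k 2 (cpx2 (S i (j - 1)) (S i (L i - 1))) = 0" "dcoeff k 2 (cpx2 (S i (L i - 1)) (S i (j - 1))) = 0"
    using dcoeff_Suc_S_S[OF j1 L1, of k 1] dcoeff_Suc_S_S[OF L1 j1, of k 1] by (simp_all add: numeral_2_eq_2)
  have F: "real (?g (Y i)) + 1 - real (cpx2 (Y i) (S i (j - 1)) (Y i)) = 1"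
    using n1 by (simp add: cpx3_apply cpx2_apply)
  have "dcoeff k 3 ?g = (\<Sum>r\<in>{Ra i (L i), Ra i j}. k r * (\<Sum>s\<in>UNIV. (real (tgtF r s) - real (srcF r s)) *
            ((real (?g s) + 1 - real (srcF r s)) * dcoeff k 2 (pre_exp ?g (srcF r) s))))"
    unfolding dcoeff_3 by (rule lie_coeff_sum_over[OF A complete enabled])
  also have "\<dots> = k (Ra i (L i)) * (\<Sum>s\<in>UNIV. (real (cpx1 (U i (L i)) s) - real (cpx2 (Y i) (S i (L i - 1)) s)) *
            ((real (?g s) + 1 - real (cpx2 (Y i) (S i (L i - 1)) s)) * dcoeff k 2 (pre_exp ?g (cpx2 (Y i) (S i (L i - 1))) s))) +
       k (Ra i j) * (\<Sum>s\<in>UNIV. (real (cpx1 (U i j) s) - real (cpx2 (Y i) (S i (j - 1)) s)) *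
            ((real (?g s) + 1 - real (cpx2 (Y i) (S i (j - 1)) s)) * dcoeff k 2 (pre_exp ?g (cpx2 (Y i) (S i (j - 1))) s)))"
    using ne by simp
  also have "\<dots> = - (k (Ra i j) * (k (Ra i (L i)) * k (Rc i (L i))))"
    unfolding lie_sum_cpx3_1[where c="dcoeff k 2"] lie_sum_cpx3_2[where c="dcoeff k 2"] using z1 z2 z2b z3 F by simp
  finally show ?thesis .
qed

lemma dcoeff3_S_U: assumes j: "j \<in> {1..L i}" and jl: "j < L i"
  shows "dcoeff k 3 (cpx2 (S i (L i - 1)) (U i j)) = (k (Rb i j) + k (Rc i j)) * (k (Ra i (L i)) * k (Rc i (L i)))"
proof -
  let ?g = "cpx2 (S i (L i - 1)) (U i j)"
  have j0: "j \<in> {0..L i}" and j1: "j - 1 \<in> {0..L i}" and L1: "L i - 1 \<in> {0..L i}" using j by auto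
  have A: "{Rb i j, Rc i j} \<subseteq> R" using i_in j unfolding labs_def by blast
  have complete: "r \<in> {Rb i j, Rc i j}" if r: "r \<in> R" and le: "srcF r \<le> ?g" for r
    by (rule src_le_S_U[OF L1 j r le])
  have enabled: "srcF r \<le> ?g" if "r \<in> {Rb i j, Rc i j}" for r
    using that by (auto simp: cpx1_le_iff cpx2_pos)
  have n1: "Y i \<noteq> S i (L i - 1)" "Y i \<noteq> U i j" using S_neq_Y[OF L1] U_neq_Y[OF j] by metis+
  have z1: "dcoeff k 2 (cpx2 (S i (L i - 1)) (U i j)) = 0" using dcoeff2_S_U[OF L1 _ j, of k] L_i_pos by auto
  have z2b: "dcoeff k 2 (cpx2 (S i (L i - 1)) (Y i)) = k (Ra i (L i)) * k (Rc i (L i))"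
    using dcoeff2_S[of k] unfolding cpx2_ymon_Y .
  have z3: "dcoeff k 2 (cpx2 (S i (L i - 1)) (S i (j - 1))) = 0" "dcoeff k 2 (cpx2 (S i (L i - 1)) (S i j)) = 0"
    using dcoeff_Suc_S_S[OF L1 j1, of k 1] dcoeff_Suc_S_S[OF L1 j0, of k 1] by (simp_all add: numeral_2_eq_2)
  have F: "real (?g (Y i)) + 1 - real (cpx1 (U i j) (Y i)) = 1"
    using n1 by (simp add: cpx1_apply cpx2_apply)
  have "dcoeff k 3 ?g = (\<Sum>r\<in>{Rb i j, Rc i j}. k r * (\<Sum>s\<in>UNIV. (real (tgtF r s) - real (srcF r s)) *
            ((real (?g s) + 1 - real (srcF r s)) * dcoeff k 2 (pre_exp ?g (srcF r) s))))"
    unfolding dcoeff_3 by (rule lie_coeff_sum_over[OF A complete enabled])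
  also have "\<dots> = k (Rb i j) * (\<Sum>s\<in>UNIV. (real (cpx2 (Y i) (S i (j - 1)) s) - real (cpx1 (U i j) s)) *
            ((real (?g s) + 1 - real (cpx1 (U i j) s)) * dcoeff k 2 (pre_exp ?g (cpx1 (U i j)) s))) +
       k (Rc i j) * (\<Sum>s\<in>UNIV. (real (cpx2 (Y i) (S i j) s) - real (cpx1 (U i j) s)) *
            ((real (?g s) + 1 - real (cpx1 (U i j) s)) * dcoeff k 2 (pre_exp ?g (cpx1 (U i j)) s)))"
    by simp
  also have "\<dots> = (k (Rb i j) + k (Rc i j)) * (k (Ra i (L i)) * k (Rc i (L i)))"
    unfolding lie_sum_cpx1[where c="dcoeff k 2"] using z1 z2b z3 F by (simp add: algebra_simps)
  finally show ?thesis .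
qed

end

section \<open>Recovering the rate constants\<close>

locale same_derivatives = component +
  fixes k1 k2 :: "rlab \<Rightarrow> real"
  assumes k1_pos: "\<And>r. r \<in> R \<Longrightarrow> 0 < k1 r"
    and total_deriv_iter_eq: "\<And>l. l \<in> {1..max 2 (2 * L i - 1)} \<Longrightarrow>
      total_deriv_iter (chain_field N L Y Yt S U V k1) l (\<lambda>x. x (S i (L i))) =
      total_deriv_iter (chain_field N L Y Yt S U V k2) l (\<lambda>x. x (S i (L i)))"
begin

lemma dcoeff_eq:
  assumes n: "n \<in> {1..max 2 (2 * L i - 1)}"
  shows "dcoeff k1 n = dcoeff k2 n"
proof (rule poly_of_inject)
  show "coeffs_in (1 + 2 * n) (dcoeff k1 n)" "coeffs_in (1 + 2 * n) (dcoeff k2 n)"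
    using total_deriv_iter_eq_poly_of by blast+
  show "poly_of (1 + 2 * n) (dcoeff k1 n) = poly_of (1 + 2 * n) (dcoeff k2 n)"
    using total_deriv_iter_eq[OF n] total_deriv_iter_eq_poly_of[of k1 n] total_deriv_iter_eq_poly_of[of k2 n]
    by simp
qed

lemma dcoeff_eq_small: "dcoeff k1 1 = dcoeff k2 1" "dcoeff k1 2 = dcoeff k2 2"
  using dcoeff_eq by auto

lemma dcoeff3_eq: "2 \<le> L i \<Longrightarrow> dcoeff k1 3 = dcoeff k2 3"
  using dcoeff_eq by auto

lemma k1_last_nonzero: "k1 (Ra i (L i)) \<noteq> 0" "k1 (Rc i (L i)) \<noteq> 0" "k1 (Rta i (L i)) \<noteq> 0"
  using k1_pos reactions_in_R[of "L i"] L_i_pos by (auto simp: less_le)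

lemma rate_prod_nonzero: "rate_prod k1 j \<noteq> 0"
  using rate_prod_pos[of k1 j] k1_pos by auto

lemma Rc_last_eq: "k1 (Rc i (L i)) = k2 (Rc i (L i))"
  using fun_cong[OF dcoeff_eq_small(1), of "ymon 0 (U i (L i))"] dcoeff_U_first[where j="L i"] L_i_pos
  by (simp add: rate_prod_L)

lemma Rb_last_eq: "k1 (Rb i (L i)) = k2 (Rb i (L i))"
proof -
  have "- ((k1 (Rb i (L i)) + k1 (Rc i (L i))) * k1 (Rc i (L i))) =
        - ((k2 (Rb i (L i)) + k2 (Rc i (L i))) * k2 (Rc i (L i)))"
    using fun_cong[OF dcoeff_eq_small(2), of "ymon 0 (U i (L i))"] unfolding dcoeff2_U .
  thus ?thesis using k1_last_nonzero unfolding Rc_last_eq[symmetric] by simp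
qed

lemma Ra_last_eq: "k1 (Ra i (L i)) = k2 (Ra i (L i))"
proof -
  have "k1 (Ra i (L i)) * k1 (Rc i (L i)) = k2 (Ra i (L i)) * k2 (Rc i (L i))"
    using fun_cong[OF dcoeff_eq_small(2), of "ymon 1 (S i (L i - 1))"] unfolding dcoeff2_S .
  thus ?thesis using k1_last_nonzero unfolding Rc_last_eq[symmetric] by simp
qed

lemma Rta_last_eq: "k1 (Rta i (L i)) = k2 (Rta i (L i))"
  using fun_cong[OF dcoeff_eq_small(1), of "cpx2 (Yt i) (S i (L i))"] dcoeff_1_Yt_S[where q="L i"] L_i_pos
  by simp

lemma Ra_eq: assumes j: "j \<in> {1..L i}" shows "k1 (Ra i j) = k2 (Ra i j)"
proof (cases "j < L i")
  case True
  hence L2: "2 \<le> L i" using j by auto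
  have "- (k1 (Ra i j) * (k1 (Ra i (L i)) * k1 (Rc i (L i)))) =
         - (k2 (Ra i j) * (k2 (Ra i (L i)) * k2 (Rc i (L i))))"
    using fun_cong[OF dcoeff3_eq[OF L2], of "cpx3 (Y i) (S i (L i - 1)) (S i (j - 1))"]
    unfolding dcoeff3_Y_S_S[OF j True] .
  thus ?thesis using k1_last_nonzero unfolding Ra_last_eq[symmetric] Rc_last_eq[symmetric] by simp
qed (use j Ra_last_eq in auto)

text \<open>Downward induction along the chain: rate_prod k j only involves the steps after j.\<close>
lemma Rc_eq: "j \<in> {1..L i} \<Longrightarrow> k1 (Rc i j) = k2 (Rc i j)"
proof (induction "L i - j" arbitrary: j rule: less_induct)
  case less
  have prod_eq: "rate_prod k1 j = rate_prod k2 j"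
    unfolding rate_prod_def
  proof (rule prod.cong[OF refl])
    fix q assume "q \<in> {Suc j..L i}"
    hence q: "q \<in> {1..L i}" and "L i - q < L i - j" using less.prems by auto
    thus "k1 (Rc i q) * k1 (Ra i q) = k2 (Rc i q) * k2 (Ra i q)" using less.hyps Ra_eq by simp
  qed
  have n: "Suc (2 * (L i - j)) \<in> {1..max 2 (2 * L i - 1)}" using less.prems by auto
  have "k1 (Rc i j) * rate_prod k1 j = k2 (Rc i j) * rate_prod k2 j"
    using fun_cong[OF dcoeff_eq[OF n], of "ymon (L i - j) (U i j)"] unfolding dcoeff_U_first[OF less.prems] .
  thus ?case using rate_prod_nonzero unfolding prod_eq[symmetric] by simp
qed

lemma rate_prod_eq: "rate_prod k1 j = rate_prod k2 j"
  unfolding rate_prod_def by (intro prod.cong refl) (simp add: Ra_eq Rc_eq)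

lemma Rtb_eq: assumes j: "j \<in> {1..L i}" shows "k1 (Rtb i j) = k2 (Rtb i j)"
proof -
  have n: "Suc (2 * (L i - j)) \<in> {1..max 2 (2 * L i - 1)}" using j by auto
  have "k1 (Rtb i j) * rate_prod k1 j = k2 (Rtb i j) * rate_prod k2 j"
    using fun_cong[OF dcoeff_eq[OF n], of "ymon (L i - j) (V i j)"] unfolding dcoeff_V_first[OF j] .
  thus ?thesis using rate_prod_nonzero unfolding rate_prod_eq[symmetric] by simp
qed

lemma Rb_eq: assumes j: "j \<in> {1..L i}" shows "k1 (Rb i j) = k2 (Rb i j)"
proof (cases "j < L i")
  case True
  hence L2: "2 \<le> L i" using j by auto
  have "(k1 (Rb i j) + k1 (Rc i j)) * (k1 (Ra i (L i)) * k1 (Rc i (L i))) =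
         (k2 (Rb i j) + k2 (Rc i j)) * (k2 (Ra i (L i)) * k2 (Rc i (L i)))"
    using fun_cong[OF dcoeff3_eq[OF L2], of "cpx2 (S i (L i - 1)) (U i j)"] unfolding dcoeff3_S_U[OF j True] .
  thus ?thesis
    using k1_last_nonzero unfolding Ra_last_eq[symmetric] Rc_last_eq[symmetric] Rc_eq[OF j] by simp
qed (use j Rb_last_eq in auto)

lemma Rta_eq: assumes j: "j \<in> {1..L i}" shows "k1 (Rta i j) = k2 (Rta i j)"
proof (cases "j < L i")
  case True
  have "k1 (Rta i j) * k1 (Rta i (L i)) = k2 (Rta i j) * k2 (Rta i (L i))"
    using fun_cong[OF dcoeff_eq_small(2), of "cpx3 (Yt i) (S i (L i)) (S i j)"]
    unfolding dcoeff2_Yt_S_S[OF j True] .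
  thus ?thesis using k1_last_nonzero unfolding Rta_last_eq[symmetric] by simp
qed (use j Rta_last_eq in auto)

lemma Rtc_eq: assumes j: "j \<in> {1..L i}" shows "k1 (Rtc i j) = k2 (Rtc i j)"
proof -
  have "- ((k1 (Rtb i j) + k1 (Rtc i j)) * k1 (Rta i (L i))) =
        - ((k2 (Rtb i j) + k2 (Rtc i j)) * k2 (Rta i (L i)))"
    using fun_cong[OF dcoeff_eq_small(2), of "cpx2 (S i (L i)) (V i j)"] unfolding dcoeff2_S_V[OF j] .
  thus ?thesis using k1_last_nonzero unfolding Rta_last_eq[symmetric] Rtb_eq[OF j] by simp
qed

end

theorem mainTheorem4:
  fixes N :: nat and L :: "nat \<Rightarrow> nat"
    and Y Yt :: "nat \<Rightarrow> 's::finite" and S U V :: "nat \<Rightarrow> nat \<Rightarrow> 's"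
  assumes "H1 N L Y Yt S U V" and "H2 N L Y Yt S U V"
  shows "\<forall>k1 k2 :: rlab \<Rightarrow> real.
           (\<forall>r\<in>labs N L. 0 < k1 r) \<longrightarrow> (\<forall>r\<in>labs N L. 0 < k2 r) \<longrightarrow>
           (\<forall>i\<in>{1..N}. \<forall>l\<in>{1..max 2 (2 * L i - 1)}.
              total_deriv_iter (chain_field N L Y Yt S U V k1) l (\<lambda>x. x (S i (L i))) =
              total_deriv_iter (chain_field N L Y Yt S U V k2) l (\<lambda>x. x (S i (L i)))) \<longrightarrow>
           (\<forall>r\<in>labs N L. k1 r = k2 r)"
proof (intro allI impI ballI)
  fix k1 k2 :: "rlab \<Rightarrow> real" and r
  assume pos: "\<forall>r\<in>labs N L. 0 < k1 r" and "\<forall>r\<in>labs N L. 0 < k2 r"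
    and same: "\<forall>i\<in>{1..N}. \<forall>l\<in>{1..max 2 (2 * L i - 1)}.
              total_deriv_iter (chain_field N L Y Yt S U V k1) l (\<lambda>x. x (S i (L i))) =
              total_deriv_iter (chain_field N L Y Yt S U V k2) l (\<lambda>x. x (S i (L i)))"
    and r: "r \<in> labs N L"
  \<comment> \<open>all divisions are by rate constants of k1\<close>
  from r obtain i j where i: "i \<in> {1..N}" and j: "j \<in> {1..L i}"
    and r_ij: "r \<in> {Ra i j, Rb i j, Rc i j, Rta i j, Rtb i j, Rtc i j}"
    unfolding labs_def by blast
  interpret same_derivatives N L Y Yt S U V i k1 k2
    using assms i pos same by unfold_locales auto
  show "k1 r = k2 r"
    using r_ij Ra_eq[OF j] Rb_eq[OF j] Rc_eq[OF j] Rta_eq[OF j] Rtb_eq[OF j] Rtc_eq[OF j] by auto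
qed

end
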